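(* Let $\mathbb{T}=\mathbb{R}/\mathbb{Z}$ and let $u:\mathbb{T}\times[0,T]\to\mathbb{R}$ be smooth with $u_{xx}\in C(\mathbb{T}\times[0,T])$. Assume there is a constant $C_1>0$ with $h^4\le C_1\Delta t$. Then there exists $C>0$, independent of the meshes, $n$ and $g$, such that for every $n\in\{0,\dots,N-1\}$ with $\Delta t_n$ sufficiently small and every $g\in H^2(\mathbb{T})$, $$\|g\circ X^n\|_{H^2_{h,\Delta t}(\mathbb{T})}\le(1+C\Delta t_n)\|g\|_{H^2_{h,\Delta t}(\mathbb{T})}.$$
   Context: Temporal mesh $0=t^0<\dots<t^N=T$, $\Delta t_n=t^{n+1}-t^n$, $\Delta t=\max_n\Delta t_n<1$. Spatial mesh $0=x_0<\dots<x_M=1$, $h=\max_j(x_{j+1}-x_j)$. $X^n(x)=x-\Delta t_n(\tfrac16k_1^n+\tfrac46k_2^n+\tfrac16k_3^n)(x)$ with $k_1^n(x)=u(x,t^{n+1})$, $k_2^n(x)=u(x-\tfrac{\Delta t_n}{2}k_1^n(x),t^{n+1}-\tfrac{\Delta t_n}{2})$, $k_3^n(x)=u(x-\Delta t_n(-k_1^n(x)+2k_2^n(x)),t^{n+1}-\Delta t_n)$. $\|g\|_{H^2_{h,\Delta t}(\mathbb{T})}=\big(\|g\|_{L^2}^2+\tfrac{h^4}{\Delta t}\|g''\|_{L^2}^2\big)^{1/2}$. *)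

theory Defs
  imports "HOL-Analysis.Analysis"
begin

text \<open>Functions on the torus T = R/Z are represented as 1-periodic functions on R.\<close>

definition periodic1 :: "(real \<Rightarrow> real) \<Rightarrow> bool" where
  "periodic1 g \<longleftrightarrow> (\<forall>x. g (x + 1) = g x)"

definition weak_d2 :: "(real \<Rightarrow> real) \<Rightarrow> (real \<Rightarrow> real) \<Rightarrow> bool" where
  "weak_d2 g g2 \<longleftrightarrow> (\<exists>g1. (\<forall>x. (g has_real_derivative g1 x) (at x)) \<and>
     (\<forall>a b. a \<le> b \<longrightarrow> g2 integrable_on {a..b} \<and> g1 b - g1 a = integral {a..b} g2))"

definition H2_per :: "(real \<Rightarrow> real) \<Rightarrow> bool" where
  "H2_per g \<longleftrightarrow> periodic1 g \<and>
     (\<exists>g2. weak_d2 g g2 \<and> (\<lambda>x. (g2 x)\<^sup>2) integrable_on {0..1})"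

definition d2 :: "(real \<Rightarrow> real) \<Rightarrow> (real \<Rightarrow> real)" where
  "d2 g = (SOME g2. weak_d2 g g2 \<and> (\<lambda>x. (g2 x)\<^sup>2) integrable_on {0..1})"

definition L2_norm :: "(real \<Rightarrow> real) \<Rightarrow> real" where
  "L2_norm g = sqrt (integral {0..1} (\<lambda>x. (g x)\<^sup>2))"

definition H2_hdt_norm :: "real \<Rightarrow> real \<Rightarrow> (real \<Rightarrow> real) \<Rightarrow> real" where
  "H2_hdt_norm h dt g = sqrt ((L2_norm g)\<^sup>2 + h ^ 4 / dt * (L2_norm (d2 g))\<^sup>2)"

text \<open>The RK3 characteristic foot map X^n, with dtn = Delta t_n and t1 = t^{n+1}.
  The velocity u is written u x t.\<close>
definition Xmap :: "(real \<Rightarrow> real \<Rightarrow> real) \<Rightarrow> real \<Rightarrow> real \<Rightarrow> real \<Rightarrow> real" where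
  "Xmap u dtn t1 x =
    (let k1 = u x t1;
         k2 = u (x - dtn / 2 * k1) (t1 - dtn / 2);
         k3 = u (x - dtn * (- k1 + 2 * k2)) (t1 - dtn)
     in x - dtn * (k1 / 6 + 4 / 6 * k2 + k3 / 6))"

definition partition :: "nat \<Rightarrow> (nat \<Rightarrow> real) \<Rightarrow> real \<Rightarrow> bool" where
  "partition K p L \<longleftrightarrow> p 0 = 0 \<and> p K = L \<and> (\<forall>i<K. p i < p (Suc i))"

definition mesh_size :: "nat \<Rightarrow> (nat \<Rightarrow> real) \<Rightarrow> real" where
  "mesh_size K p = Max ((\<lambda>i. p (Suc i) - p i) ` {..<K})"

end

theory Submission
  imports Defs
begin

(* Each Runge-Kutta stage x |-> u(x - a V(x), s) of a 1-periodic C^2 map V with |a| <= 1 is again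
   1-periodic and C^2, with bounds on the first two derivatives depending only on those of V.
   Hence X^n = id - dt_n V with |V'|, |V''| <= E for a constant E independent of the meshes, and
   X^n lifts a circle map with |(X^n)' - 1|, |(X^n)''| <= dt_n E.
   The change of variables y = X^n(x) and periodicity give |g o X^n|^2 <= (1 + 2 dt_n E) |g|^2
   in L^2.  In the weak sense (g o X)'' = X'^2 g'' o X + X'' g' o X, the product rule being
   justified by integrating by parts against the absolutely continuous g'.  The first term is
   handled by the same change of variables, the second is O(dt_n) |g'|, and
   |g'|^2 <= (|g|^2 + |g''|^2) / 2 by one more integration by parts.  The resulting term |g|^2 in
   the bound for |(g o X)''|^2 enters the H^2_{h,dt} norm with the weight h^4 / dt <= C1. *)

section \<open>Periodic functions\<close>

lemma periodic1_plus_of_int: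
  assumes "periodic1 f"
  shows "f (x + of_int k) = f x"
proof (induction k rule: int_induct[where k = 0])
  case (step1 i)
  then show ?case
    using assms[unfolded periodic1_def, rule_format, of "x + of_int i"] by (simp add: add.assoc)
next
  case (step2 i)
  then show ?case
    using assms[unfolded periodic1_def, rule_format, of "x + of_int (i - 1)"] by simp
qed simp

lemma periodic1_has_integral_shift:
  assumes "periodic1 f" and "(f has_integral I) {0..1}"
  shows "(f has_integral I) {of_int k..of_int k + 1}"
proof -
  have "f \<circ> (+) (of_int k) = f"
    using periodic1_plus_of_int[OF assms(1)] by (auto simp: add.commute)
  with assms(2) show ?thesis
    by (metis add_0 has_integral_shift_Icc_real add.commute)
qed

lemma periodic1_integrable_on:
  assumes per: "periodic1 f" and int01: "f integrable_on {0..1}"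
  shows "f integrable_on {a..b}"
proof -
  have unit: "f integrable_on {of_int k..of_int k + 1}" for k
    using periodic1_has_integral_shift[OF per integrable_integral[OF int01]] by blast
  have sym: "f integrable_on {- real n..real n}" for n
  proof (induction n)
    case 0
    then show ?case using integrable_on_refl[of f 0] by simp
  next
    case (Suc n)
    have left: "f integrable_on {- real (Suc n)..- real n}"
      and right: "f integrable_on {real n..real (Suc n)}"
      using unit[of "- int (Suc n)"] unit[of "int n"] by (simp_all add: add.commute)
    have middle: "f integrable_on {- real (Suc n)..real n}"
      by (rule Henstock_Kurzweil_Integration.integrable_combine[OF _ _ left Suc]) auto
    show ?case
      by (rule Henstock_Kurzweil_Integration.integrable_combine[OF _ _ middle right]) auto
  qed
  obtain n :: nat where "max \<bar>a\<bar> \<bar>b\<bar> \<le> real n"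
    using real_arch_simple by blast
  then have "{a..b} \<subseteq> {- real n..real n}" by auto
  then show ?thesis using sym[of n] integrable_on_subinterval by blast
qed

lemma periodic1_integral_unit_interval:
  assumes per: "periodic1 f" and int01: "f integrable_on {0..1}"
  shows "integral {c..c + 1} f = integral {0..1} f"
proof -
  define k where "k = \<lfloor>c\<rfloor>"
  have k: "of_int k \<le> c" "c < of_int k + 1" unfolding k_def by linarith+
  have int: "f integrable_on {a..b}" for a b
    using periodic1_integrable_on[OF per int01] .
  have shift1: "integral {of_int k + 1..c + 1} f = integral {of_int k..c} f"
  proof -
    have "f \<circ> (+) 1 = f" using per by (auto simp: periodic1_def add.commute)
    then show ?thesis
      using has_integral_shift_Icc_real[of f 1 "integral {of_int k + 1..c + 1} f" "of_int k" c]
      by (simp add: add.commute int integrable_integral integral_unique)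
  qed
  have "integral {c..c + 1} f = integral {c..of_int k + 1} f + integral {of_int k + 1..c + 1} f"
    using k by (intro Henstock_Kurzweil_Integration.integral_combine[symmetric] int) auto
  also have "\<dots> = integral {of_int k..of_int k + 1} f"
    using k unfolding shift1
    by (subst Henstock_Kurzweil_Integration.integral_combine[symmetric, of _ c]) (auto intro: int)
  also have "\<dots> = integral {0..1} f"
    using periodic1_has_integral_shift[OF per integrable_integral[OF int01], of k]
    by (simp add: integral_unique)
  finally show ?thesis .
qed

lemma periodic1_derivative:
  assumes "periodic1 g" and deriv: "\<And>x. (g has_real_derivative g' x) (at x)"
  shows "periodic1 g'"
  unfolding periodic1_def
proof
  fix x
  have "((\<lambda>y. g (y + 1)) has_real_derivative g' (x + 1) * 1) (at x)"
    by (rule DERIV_chain2[OF deriv]) (auto intro!: derivative_eq_intros)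
  moreover have "(\<lambda>y. g (y + 1)) = g"
    using assms(1) by (auto simp: periodic1_def)
  ultimately show "g' (x + 1) = g' x"
    using deriv[of x] DERIV_unique by fastforce
qed

lemma periodic_bounded_on_strip:
  fixes f :: "real \<Rightarrow> real \<Rightarrow> real"
  assumes cont: "continuous_on (UNIV \<times> {0..T}) (\<lambda>(x, t). f x t)"
    and per: "\<And>x t. t \<in> {0..T} \<Longrightarrow> f (x + 1) t = f x t"
  obtains B where "\<And>x t. t \<in> {0..T} \<Longrightarrow> \<bar>f x t\<bar> \<le> B"
proof -
  have "compact ((\<lambda>(x, t). f x t) ` ({0..1} \<times> {0..T}))"
    by (intro compact_continuous_image continuous_on_subset[OF cont] compact_Times) auto
  then obtain B where B: "\<And>z. z \<in> (\<lambda>(x, t). f x t) ` ({0..1} \<times> {0..T}) \<Longrightarrow> norm z \<le> B"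
    using compact_imp_bounded bounded_iff by metis
  have "\<bar>f x t\<bar> \<le> B" if t: "t \<in> {0..T}" for x t
  proof -
    have "periodic1 (\<lambda>y. f y t)"
      using per t by (simp add: periodic1_def)
    then have "f x t = f (x - of_int \<lfloor>x\<rfloor>) t"
      using periodic1_plus_of_int[of "\<lambda>y. f y t" "x - of_int \<lfloor>x\<rfloor>" "\<lfloor>x\<rfloor>"] by simp
    moreover have "x - of_int \<lfloor>x\<rfloor> \<in> {0..1}"
      by simp linarith
    ultimately show ?thesis using B[of "f (x - of_int \<lfloor>x\<rfloor>) t"] t by force
  qed
  then show ?thesis by (rule that)
qed

section \<open>Weak second derivatives\<close>

lemma negligible_neq_of_equal_interval_integrals:
  fixes f g :: "real \<Rightarrow> real"
  assumes f: "\<And>a b. a \<le> b \<Longrightarrow> (f has_integral I a b) {a..b}"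
    and g: "\<And>a b. a \<le> b \<Longrightarrow> (g has_integral I a b) {a..b}"
  shows "negligible {x. f x \<noteq> g x}"
proof -
  have zero: "((\<lambda>x. f x - g x) has_integral 0) {a..b}" if "a \<le> b" for a b
    using has_integral_diff[OF f[OF that] g[OF that]] by simp
  have "(\<lambda>x. f x - g x) integrable_on cbox a b" for a b
    using zero[of a b] by (cases "a \<le> b") (auto simp: integrable_on_empty)
  then obtain N where N: "negligible N"
    and lebesgue_point: "\<And>x e. x \<notin> N \<Longrightarrow> 0 < e \<Longrightarrow> \<exists>d>0. \<forall>h. 0 < h \<and> h < d \<longrightarrow>
        norm (integral (cbox x (x + h *\<^sub>R One)) (\<lambda>x. f x - g x) /\<^sub>R h ^ DIM(real) - (f x - g x)) < e"
    using integrable_ccontinuous_explicit by blast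
  have "{x. f x \<noteq> g x} \<subseteq> N"
  proof (rule subsetI, rule ccontr)
    fix x assume "x \<in> {x. f x \<noteq> g x}" "x \<notin> N"
    then obtain d where "d > 0" and near: "\<And>h. 0 < h \<and> h < d \<Longrightarrow>
        norm (integral (cbox x (x + h *\<^sub>R One)) (\<lambda>x. f x - g x) /\<^sub>R h ^ DIM(real)
          - (f x - g x)) < \<bar>f x - g x\<bar>"
      using lebesgue_point[of x "\<bar>f x - g x\<bar>"] by auto
    have "norm (integral (cbox x (x + (d / 2) *\<^sub>R One)) (\<lambda>x. f x - g x) /\<^sub>R (d / 2) ^ DIM(real)
         - (f x - g x)) < \<bar>f x - g x\<bar>"
      using near[of "d / 2"] \<open>d > 0\<close> by simp
    moreover have "integral (cbox x (x + (d / 2) *\<^sub>R One)) (\<lambda>x. f x - g x) = 0"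
      using zero[of x "x + d / 2"] \<open>d > 0\<close> by (simp add: integral_unique)
    ultimately show False by simp
  qed
  with N show ?thesis using negligible_subset by blast
qed

lemma continuous_on_primitive:
  fixes k F :: "real \<Rightarrow> real"
  assumes F: "\<And>p q. a \<le> p \<Longrightarrow> p \<le> q \<Longrightarrow> q \<le> b \<Longrightarrow> (k has_integral F q - F p) {p..q}"
  shows "continuous_on {a..b} F"
proof (cases "a \<le> b")
  case True
  have "continuous_on {a..b} (\<lambda>y. F a + integral {a..y} k)"
    using F[OF order_refl True order_refl]
    by (intro continuous_intros indefinite_integral_continuous_1) (auto simp: has_integral_integrable)
  moreover have "F a + integral {a..y} k = F y" if "y \<in> {a..b}" for y
    using F[of a y] that by (simp add: integral_unique)
  ultimately show ?thesis
    by (rule continuous_on_eq)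
qed simp

definition weak_derivs :: "(real \<Rightarrow> real) \<Rightarrow> (real \<Rightarrow> real) \<Rightarrow> (real \<Rightarrow> real) \<Rightarrow> bool" where
  "weak_derivs g g1 g2 \<longleftrightarrow> (\<forall>x. (g has_real_derivative g1 x) (at x)) \<and>
     (\<forall>a b. a \<le> b \<longrightarrow> (g2 has_integral g1 b - g1 a) {a..b})"

lemma weak_d2_iff_weak_derivs: "weak_d2 g g2 \<longleftrightarrow> (\<exists>g1. weak_derivs g g1 g2)"
  unfolding weak_d2_def weak_derivs_def by (metis has_integral_integrable_integral)

lemma weak_derivs_continuous:
  assumes "weak_derivs g g1 g2"
  shows "continuous_on UNIV g1"
proof -
  have "isCont g1 x" for x
  proof (rule continuous_on_interior)
    show "continuous_on {x - 1..x + 1} g1"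
      using assms unfolding weak_derivs_def by (intro continuous_on_primitive) blast
  qed auto
  then show ?thesis
    by (simp add: continuous_at_imp_continuous_on)
qed

lemma weak_derivs_ae_unique:
  assumes "weak_derivs g g1 g2" and "weak_derivs g g1' g2'"
  shows "negligible {x. g2 x \<noteq> g2' x}"
proof -
  have "g1' = g1"
    using assms unfolding weak_derivs_def by (metis DERIV_unique ext)
  then show ?thesis
    using assms unfolding weak_derivs_def by (intro negligible_neq_of_equal_interval_integrals) auto
qed

lemma weak_derivs_shift:
  assumes "periodic1 g1" and "weak_derivs g g1 g2"
  shows "weak_derivs g g1 (\<lambda>x. g2 (x + of_int k))"
  unfolding weak_derivs_def
proof (intro conjI allI impI)
  show "(g has_real_derivative g1 x) (at x)" for x
    using assms(2) by (simp add: weak_derivs_def)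
  fix a b :: real
  assume "a \<le> b"
  then have "(g2 has_integral g1 (b + of_int k) - g1 (a + of_int k)) {a + of_int k..b + of_int k}"
    using assms(2) by (simp add: weak_derivs_def)
  then show "((\<lambda>x. g2 (x + of_int k)) has_integral g1 b - g1 a) {a..b}"
    using has_integral_shift_Icc_real[of g2 "of_int k" _ a b]
    by (simp add: periodic1_plus_of_int[OF assms(1)] o_def add.commute)
qed

lemma square_integrable_imp_absolutely_integrable:
  fixes f :: "real \<Rightarrow> real"
  assumes "f integrable_on {a..b}" and "(\<lambda>x. (f x)\<^sup>2) integrable_on {a..b}"
  shows "f absolutely_integrable_on {a..b}"
proof (rule absolutely_integrable_integrable_bound[where g = "\<lambda>x. (1 + (f x)\<^sup>2) / 2"])
  show "norm (f x) \<le> (1 + (f x)\<^sup>2) / 2" for x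
    using sum_squares_bound[of "\<bar>f x\<bar>" 1] by (simp add: power2_eq_square algebra_simps)
  show "(\<lambda>x. (1 + (f x)\<^sup>2) / 2) integrable_on {a..b}"
  proof -
    have "(\<lambda>x. 1 + (f x)\<^sup>2) integrable_on {a..b}"
      using assms(2) by (intro Henstock_Kurzweil_Integration.integrable_add) auto
    then show ?thesis by simp
  qed
qed (fact assms(1))

text \<open>The weak second derivative is determined only almost everywhere and need not be periodic.
  Every integer translate of it is again a weak second derivative, so it agrees almost everywhere
  with the periodic function \<open>x \<mapsto> g2 (x - \<lfloor>x\<rfloor>)\<close>.\<close>

lemma H2_per_periodic_weak_derivs:
  assumes "H2_per g"
  obtains g1 g2 where "weak_derivs g g1 g2" "periodic1 g1" "periodic1 g2"
    "(\<lambda>x. (g2 x)\<^sup>2) integrable_on {0..1}"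
proof -
  obtain g2 g1 where derivs: "weak_derivs g g1 g2" and sq: "(\<lambda>x. (g2 x)\<^sup>2) integrable_on {0..1}"
    using assms unfolding H2_per_def weak_d2_iff_weak_derivs by blast
  have per1: "periodic1 g1"
    using assms derivs unfolding H2_per_def weak_derivs_def by (blast intro: periodic1_derivative)
  define G2 where "G2 x = g2 (x + of_int (- \<lfloor>x\<rfloor>))" for x
  have "{x. G2 x \<noteq> g2 x} \<subseteq> (\<Union>k. {x. g2 (x + of_int k) \<noteq> g2 x})"
    unfolding G2_def by blast
  moreover have "negligible (\<Union>k. {x. g2 (x + of_int k) \<noteq> g2 x})"
    using weak_derivs_ae_unique[OF weak_derivs_shift[OF per1 derivs] derivs]
    by (intro negligible_countable_Union) auto
  ultimately have ae: "negligible {x. G2 x \<noteq> g2 x}"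
    using negligible_subset by blast
  show ?thesis
  proof
    show "weak_derivs g g1 G2"
      using derivs ae unfolding weak_derivs_def by (blast intro: has_integral_spike)
    show "periodic1 g1" by (fact per1)
    show "periodic1 G2"
      unfolding periodic1_def G2_def by (simp add: algebra_simps)
    show "(\<lambda>x. (G2 x)\<^sup>2) integrable_on {0..1}"
      by (rule integrable_spike[OF sq ae]) auto
  qed
qed

text \<open>Since \<^const>\<open>d2\<close> is defined by Hilbert choice, only almost-everywhere invariant
  quantities such as its square integral are determined.\<close>

lemma integral_d2_square:
  assumes derivs: "weak_derivs g g1 g2" and sq: "(\<lambda>x. (g2 x)\<^sup>2) integrable_on {0..1}"
  shows "integral {0..1} (\<lambda>x. (d2 g x)\<^sup>2) = integral {0..1} (\<lambda>x. (g2 x)\<^sup>2)"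
proof -
  have "\<exists>g2. weak_d2 g g2 \<and> (\<lambda>x. (g2 x)\<^sup>2) integrable_on {0..1}"
    using derivs sq weak_d2_iff_weak_derivs by blast
  then have "weak_d2 g (d2 g)"
    unfolding d2_def by (rule someI2_ex) blast
  then obtain g1' where "weak_derivs g g1' (d2 g)"
    using weak_d2_iff_weak_derivs by blast
  from weak_derivs_ae_unique[OF this derivs] show ?thesis
    by (intro integral_spike[of "{x. d2 g x \<noteq> g2 x}"]) auto
qed

lemma H2_per_weak_derivsE:
  assumes "H2_per g"
  obtains g1 g2 where "weak_derivs g g1 g2" "periodic1 g" "periodic1 g1" "periodic1 g2"
    "\<And>a b. g2 absolutely_integrable_on {a..b}" "(\<lambda>x. (g2 x)\<^sup>2) integrable_on {0..1}"
    "integral {0..1} (\<lambda>x. (d2 g x)\<^sup>2) = integral {0..1} (\<lambda>x. (g2 x)\<^sup>2)"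
proof -
  obtain g1 g2 where derivs: "weak_derivs g g1 g2" and per: "periodic1 g1" "periodic1 g2"
    and sq: "(\<lambda>x. (g2 x)\<^sup>2) integrable_on {0..1}"
    using H2_per_periodic_weak_derivs[OF assms] by blast
  have "g2 absolutely_integrable_on {a..b}" for a b
  proof (cases "a \<le> b")
    case True
    have "periodic1 (\<lambda>x. (g2 x)\<^sup>2)"
      using per(2) by (simp add: periodic1_def)
    with True derivs sq show ?thesis
      unfolding weak_derivs_def
      by (blast intro: square_integrable_imp_absolutely_integrable periodic1_integrable_on)
  qed simp
  moreover have "periodic1 g"
    using assms by (simp add: H2_per_def)
  ultimately show ?thesis
    using that[OF derivs _ per] sq integral_d2_square[OF derivs sq] by blast
qed

lemma L2_norm_square: "(L2_norm f)\<^sup>2 = integral {0..1} (\<lambda>x. (f x)\<^sup>2)"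
proof -
  have "0 \<le> integral {0..1} (\<lambda>x. (f x)\<^sup>2)"
    by (cases "(\<lambda>x. (f x)\<^sup>2) integrable_on {0..1}") (auto intro: integral_nonneg simp: not_integrable_integral)
  then show ?thesis
    unfolding L2_norm_def by simp
qed

section \<open>Integration by parts against a primitive\<close>

lemma absolutely_integrable_continuous_mult:
  fixes k c :: "real \<Rightarrow> real"
  assumes "k absolutely_integrable_on {a..b}" and "continuous_on {a..b} c"
  shows "(\<lambda>x. c x * k x) absolutely_integrable_on {a..b}"
proof (rule absolutely_integrable_bounded_measurable_product_real)
  show "c \<in> borel_measurable (lebesgue_on {a..b})"
    using assms(2) by (intro continuous_imp_measurable_on_sets_lebesgue) auto
  show "bounded (c ` {a..b})"
    using compact_continuous_image[OF assms(2)] compact_imp_bounded by auto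
qed (use assms(1) in auto)

lemma continuous_derivative_imp_lipschitz:
  fixes phi :: "real \<Rightarrow> real"
  assumes deriv: "\<And>x. x \<in> {a..b} \<Longrightarrow> (phi has_real_derivative phi' x) (at x)"
    and cont: "continuous_on {a..b} phi'"
  obtains M where "M-lipschitz_on {a..b} phi"
proof -
  obtain M where M: "\<And>x. x \<in> {a..b} \<Longrightarrow> norm (phi' x) \<le> M" and "M > 0"
    using compact_imp_bounded[OF compact_continuous_image[OF cont compact_Icc]]
    unfolding bounded_pos by blast
  have "M-lipschitz_on {a..b} phi"
  proof (rule lipschitz_onI)
    fix x y assume "x \<in> {a..b}" "y \<in> {a..b}"
    then have "norm (phi x - phi y) \<le> M * norm (x - y)"
      using M deriv
      by (intro field_differentiable_bound[of "{a..b}"]) (auto intro: has_field_derivative_at_within)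
    then show "dist (phi x) (phi y) \<le> M * dist x y"
      by (simp add: dist_norm)
  qed (use \<open>M > 0\<close> in simp)
  then show ?thesis by (rule that)
qed

lemma product_increment_integral_estimate:
  fixes k F phi :: "real \<Rightarrow> real"
  assumes k: "(k has_integral F q - F p) {p..q}" and k_abs: "k absolutely_integrable_on {p..q}"
    and lip: "M-lipschitz_on {p..q} phi" and r: "r \<in> {p..q}"
  shows "\<bar>(F q - F p) * phi r - integral {p..q} (\<lambda>s. k s * phi s)\<bar>
           \<le> M * (q - p) * integral {p..q} (\<lambda>s. \<bar>k s\<bar>)"
proof -
  have kphi: "(\<lambda>s. k s * phi s) integrable_on {p..q}"
    using absolutely_integrable_continuous_mult[OF k_abs lipschitz_on_continuous_on[OF lip]]
    by (simp add: absolutely_integrable_on_def mult.commute)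
  have abs_k: "(\<lambda>s. \<bar>k s\<bar>) integrable_on {p..q}"
    using k_abs by (simp add: absolutely_integrable_on_def)
  have "((\<lambda>s. k s * (phi r - phi s)) has_integral
          (F q - F p) * phi r - integral {p..q} (\<lambda>s. k s * phi s)) {p..q}"
    using has_integral_diff[OF has_integral_mult_left[OF k, of "phi r"] integrable_integral[OF kphi]]
    by (simp add: algebra_simps)
  then have "(F q - F p) * phi r - integral {p..q} (\<lambda>s. k s * phi s)
      = integral {p..q} (\<lambda>s. k s * (phi r - phi s))"
    and int: "(\<lambda>s. k s * (phi r - phi s)) integrable_on {p..q}"
    by (auto simp: integral_unique)
  moreover have bound: "norm (k s * (phi r - phi s)) \<le> M * (q - p) * \<bar>k s\<bar>" if s: "s \<in> {p..q}" for s
  proof -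
    have "\<bar>phi r - phi s\<bar> \<le> M * \<bar>r - s\<bar>"
      using lipschitz_on_normD[OF lip r s] by simp
    also have "\<dots> \<le> M * (q - p)"
      using r s lipschitz_on_nonneg[OF lip] by (intro mult_left_mono) auto
    finally show ?thesis
      by (simp add: abs_mult mult_left_mono mult.commute)
  qed
  moreover have "norm (integral {p..q} (\<lambda>s. k s * (phi r - phi s)))
      \<le> integral {p..q} (\<lambda>s. M * (q - p) * \<bar>k s\<bar>)"
    using integrable_on_cmult_left[OF abs_k, of "M * (q - p)"]
    by (intro integral_norm_bound_integral[OF int _ bound]) auto
  ultimately show ?thesis
    by simp
qed

text \<open>A primitive \<open>F\<close> of an integrable \<open>k\<close> need not be differentiable, so the product rule
  for \<open>F * phi\<close> is replaced by the following bound on the remainder; it is \<open>o(\<bar>y - x\<bar>)\<close>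
  because the indefinite integral of \<open>\<bar>k\<bar>\<close> is continuous.\<close>

lemma product_minus_integral_increment:
  fixes k F phi :: "real \<Rightarrow> real"
  assumes F: "\<And>p q. a \<le> p \<Longrightarrow> p \<le> q \<Longrightarrow> q \<le> b \<Longrightarrow> (k has_integral F q - F p) {p..q}"
    and k_abs: "k absolutely_integrable_on {a..b}" and lip: "M-lipschitz_on {a..b} phi"
    and x: "x \<in> {a..b}" and y: "y \<in> {a..b}"
  defines "E \<equiv> \<lambda>y. F y * phi y - integral {a..y} (\<lambda>s. k s * phi s)"
    and "J \<equiv> \<lambda>y. integral {a..y} (\<lambda>s. \<bar>k s\<bar>)"
  shows "\<bar>E y - E x - F x * (phi y - phi x)\<bar> \<le> M * \<bar>y - x\<bar> * \<bar>J y - J x\<bar>"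
proof -
  define I where "I y = integral {a..y} (\<lambda>s. k s * phi s)" for y
  have "(\<lambda>s. k s * phi s) integrable_on {a..b}" "(\<lambda>s. \<bar>k s\<bar>) integrable_on {a..b}"
    using absolutely_integrable_continuous_mult[OF k_abs lipschitz_on_continuous_on[OF lip]] k_abs
    by (auto simp: absolutely_integrable_on_def mult.commute)
  then have combine: "I q = I p + integral {p..q} (\<lambda>s. k s * phi s)"
      "J q = J p + integral {p..q} (\<lambda>s. \<bar>k s\<bar>)" if "a \<le> p" "p \<le> q" "q \<le> b" for p q
    unfolding I_def J_def using that integrable_on_subinterval[of _ "{a..b}" a q]
    by (auto intro!: Henstock_Kurzweil_Integration.integral_combine[symmetric])
  have ordered: "\<bar>(F q - F p) * phi y - (I q - I p)\<bar> \<le> M * \<bar>q - p\<bar> * \<bar>J q - J p\<bar>"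
    if pq: "a \<le> p" "p \<le> q" "q \<le> b" and "y \<in> {p..q}" for p q
  proof -
    have "k absolutely_integrable_on {p..q}"
      using absolutely_integrable_on_subinterval[OF k_abs] pq by auto
    from product_increment_integral_estimate[OF F[OF pq] this lipschitz_on_subset[OF lip] \<open>y \<in> {p..q}\<close>]
    have "\<bar>(F q - F p) * phi y - (I q - I p)\<bar> \<le> M * (q - p) * (J q - J p)"
      using combine[OF pq] pq by simp
    also have "\<dots> \<le> M * \<bar>q - p\<bar> * \<bar>J q - J p\<bar>"
      using mult_left_mono[OF abs_ge_self, of "M * (q - p)" "J q - J p"] pq lipschitz_on_nonneg[OF lip]
      by simp
    finally show ?thesis .
  qed
  show ?thesis
  proof (cases "x \<le> y")
    case True
    have "E y - E x - F x * (phi y - phi x) = (F y - F x) * phi y - (I y - I x)"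
      unfolding E_def I_def by (simp add: algebra_simps)
    with ordered[of x y] True x y show ?thesis by simp
  next
    case False
    have "E y - E x - F x * (phi y - phi x) = - ((F x - F y) * phi y - (I x - I y))"
      unfolding E_def I_def by (simp add: algebra_simps)
    with ordered[of y x] False x y show ?thesis
      by (simp add: abs_minus_commute)
  qed
qed

lemma has_real_derivative_product_minus_integral:
  fixes k F phi :: "real \<Rightarrow> real"
  assumes x: "a < x" "x < b"
    and F: "\<And>p q. a \<le> p \<Longrightarrow> p \<le> q \<Longrightarrow> q \<le> b \<Longrightarrow> (k has_integral F q - F p) {p..q}"
    and k_abs: "k absolutely_integrable_on {a..b}"
    and deriv: "(phi has_real_derivative phi' x) (at x)"
    and lip: "M-lipschitz_on {a..b} phi"
  shows "((\<lambda>y. F y * phi y - integral {a..y} (\<lambda>s. k s * phi s)) has_real_derivative F x * phi' x) (at x)"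
proof -
  define E where "E y = F y * phi y - integral {a..y} (\<lambda>s. k s * phi s)" for y
  define J where "J y = integral {a..y} (\<lambda>s. \<bar>k s\<bar>)" for y
  have "isCont J x"
    unfolding J_def using x k_abs
    by (intro continuous_on_interior[OF indefinite_integral_continuous_1])
      (auto simp: absolutely_integrable_on_def)
  then have "((\<lambda>y. M * \<bar>J y - J x\<bar>) \<longlongrightarrow> M * \<bar>J x - J x\<bar>) (at x)"
    unfolding isCont_def by (intro tendsto_intros)
  then have "((\<lambda>y. M * \<bar>J y - J x\<bar>) \<longlongrightarrow> 0) (at x)"
    by simp
  then have remainder: "((\<lambda>y. (E y - E x - F x * (phi y - phi x)) / (y - x)) \<longlongrightarrow> 0) (at x)"
  proof (rule Lim_null_comparison[rotated])
    have "eventually (\<lambda>y. y \<in> {a<..<b} \<and> y \<noteq> x) (at x)"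
      using x by (intro eventually_conj eventually_at_in_open') (auto simp: eventually_at_filter)
    then show "eventually (\<lambda>y. norm ((E y - E x - F x * (phi y - phi x)) / (y - x)) \<le> M * \<bar>J y - J x\<bar>) (at x)"
    proof eventually_elim
      case (elim y)
      then have "\<bar>E y - E x - F x * (phi y - phi x)\<bar> \<le> M * \<bar>y - x\<bar> * \<bar>J y - J x\<bar>"
        using product_minus_integral_increment[OF F k_abs lip, of x y] x unfolding E_def J_def by auto
      with elim show ?case
        by (simp add: abs_divide divide_le_eq mult_ac)
    qed
  qed
  have "((\<lambda>y. F x * ((phi y - phi x) / (y - x)) + (E y - E x - F x * (phi y - phi x)) / (y - x))
      \<longlongrightarrow> F x * phi' x + 0) (at x)"
    using deriv by (intro tendsto_add tendsto_mult_left remainder) (simp add: has_field_derivative_iff)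
  then show ?thesis
    unfolding E_def[symmetric] has_field_derivative_iff
    by (simp add: diff_divide_distrib[symmetric] add_divide_distrib[symmetric] algebra_simps)
qed

lemma integration_by_parts_primitive:
  fixes k F phi phi' :: "real \<Rightarrow> real"
  assumes ab: "a \<le> b"
    and F: "\<And>p q. a \<le> p \<Longrightarrow> p \<le> q \<Longrightarrow> q \<le> b \<Longrightarrow> (k has_integral F q - F p) {p..q}"
    and k_abs: "k absolutely_integrable_on {a..b}"
    and deriv: "\<And>x. x \<in> {a..b} \<Longrightarrow> (phi has_real_derivative phi' x) (at x)"
    and cont: "continuous_on {a..b} phi'"
  shows "((\<lambda>x. k x * phi x + F x * phi' x) has_integral F b * phi b - F a * phi a) {a..b}"
proof -
  obtain M where lip: "M-lipschitz_on {a..b} phi"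
    using continuous_derivative_imp_lipschitz[OF deriv cont] by blast
  have kphi: "(\<lambda>s. k s * phi s) integrable_on {a..y}" if "y \<le> b" for y
    using absolutely_integrable_continuous_mult[OF k_abs lipschitz_on_continuous_on[OF lip]] that
      integrable_on_subinterval[of _ "{a..b}" a y]
    by (fastforce simp: absolutely_integrable_on_def mult.commute)
  have F_cont: "continuous_on {a..b} F"
    using F by (rule continuous_on_primitive)
  have Fphi'_cont: "continuous_on {a..b} (\<lambda>s. F s * phi' s)"
    by (intro continuous_intros F_cont cont)
  define D where "D y = F y * phi y - integral {a..y} (\<lambda>s. k s * phi s) - integral {a..y} (\<lambda>s. F s * phi' s)" for y
  have "(D has_real_derivative 0) (at x)" if x: "a < x" "x < b" for x
  proof -
    have "((\<lambda>y. integral {a..y} (\<lambda>s. F s * phi' s)) has_real_derivative F x * phi' x) (at x within {a..b})"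
      using x by (intro integral_has_real_derivative Fphi'_cont) auto
    then have "((\<lambda>y. integral {a..y} (\<lambda>s. F s * phi' s)) has_real_derivative F x * phi' x) (at x)"
      using x by (simp add: at_within_Icc_at)
    moreover have "(phi has_real_derivative phi' x) (at x)"
      using deriv x by auto
    then have "((\<lambda>y. F y * phi y - integral {a..y} (\<lambda>s. k s * phi s)) has_real_derivative F x * phi' x) (at x)"
      using has_real_derivative_product_minus_integral[OF x F k_abs _ lip] by simp
    ultimately show ?thesis
      unfolding D_def using DERIV_diff by fastforce
  qed
  moreover have "continuous_on {a..b} D"
  proof -
    have "continuous_on {a..b} (\<lambda>y. integral {a..y} (\<lambda>s. k s * phi s))"
      by (rule indefinite_integral_continuous_1) (use kphi in auto)
    moreover have "continuous_on {a..b} (\<lambda>y. integral {a..y} (\<lambda>s. F s * phi' s))"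
      by (rule indefinite_integral_continuous_1[OF integrable_continuous_real[OF Fphi'_cont]])
    ultimately show ?thesis
      unfolding D_def by (intro continuous_on_diff continuous_on_mult F_cont lipschitz_on_continuous_on[OF lip])
  qed
  ultimately have "D b = D a"
    using ab by (cases "a = b") (auto intro: DERIV_isconst_end)
  then have "integral {a..b} (\<lambda>s. k s * phi s) + integral {a..b} (\<lambda>s. F s * phi' s) = F b * phi b - F a * phi a"
    unfolding D_def by simp
  then show ?thesis
    using has_integral_add[OF integrable_integral[OF kphi] integrable_integral[OF integrable_continuous_real[OF Fphi'_cont]]]
    by simp
qed

lemma integral_derivative_square_le:
  assumes derivs: "weak_derivs g g1 g2" and per: "periodic1 g" "periodic1 g1"
    and g2_abs: "g2 absolutely_integrable_on {0..1}" and g2_sq: "(\<lambda>x. (g2 x)\<^sup>2) integrable_on {0..1}"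
  shows "integral {0..1} (\<lambda>x. (g1 x)\<^sup>2) \<le> (integral {0..1} (\<lambda>x. (g x)\<^sup>2) + integral {0..1} (\<lambda>x. (g2 x)\<^sup>2)) / 2"
proof -
  have g_deriv: "\<And>x. (g has_real_derivative g1 x) (at x)"
    using derivs by (simp add: weak_derivs_def)
  have g1_cont: "continuous_on UNIV g1"
    by (rule weak_derivs_continuous[OF derivs])
  have g_cont: "continuous_on UNIV g"
    using g_deriv by (meson DERIV_continuous continuous_at_imp_continuous_on)
  have "((\<lambda>x. g2 x * g x + g1 x * g1 x) has_integral g1 1 * g 1 - g1 0 * g 0) {0..1}"
    using derivs g_deriv unfolding weak_derivs_def
    by (intro integration_by_parts_primitive g2_abs continuous_on_subset[OF g1_cont]) auto
  moreover have "g 1 = g 0" "g1 1 = g1 0"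
    using per unfolding periodic1_def by (metis add_0)+
  ultimately have parts: "((\<lambda>x. g2 x * g x + (g1 x)\<^sup>2) has_integral 0) {0..1}"
    by (simp add: power2_eq_square)
  have g1_sq: "(\<lambda>x. (g1 x)\<^sup>2) integrable_on {0..1}" and g_sq: "(\<lambda>x. (g x)\<^sup>2) integrable_on {0..1}"
    by (auto intro!: integrable_continuous_real continuous_intros continuous_on_subset[OF g1_cont]
        continuous_on_subset[OF g_cont])
  have g2g: "(\<lambda>x. g2 x * g x) integrable_on {0..1}"
    using integrable_diff[OF has_integral_integrable[OF parts] g1_sq] by simp
  have "integral {0..1} (\<lambda>x. (g1 x)\<^sup>2) = integral {0..1} (\<lambda>x. - (g2 x * g x))"
    using integral_unique[OF parts] Henstock_Kurzweil_Integration.integral_add[OF g2g g1_sq]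
    by (simp add: integral_neg)
  also have "\<dots> \<le> integral {0..1} (\<lambda>x. ((g x)\<^sup>2 + (g2 x)\<^sup>2) / 2)"
  proof (rule integral_le)
    show "(\<lambda>x. - (g2 x * g x)) integrable_on {0..1}"
      using g2g by (rule integrable_neg)
    show "(\<lambda>x. ((g x)\<^sup>2 + (g2 x)\<^sup>2) / 2) integrable_on {0..1}"
      using Henstock_Kurzweil_Integration.integrable_add[OF g_sq g2_sq] by simp
    show "- (g2 x * g x) \<le> ((g x)\<^sup>2 + (g2 x)\<^sup>2) / 2" for x
      using zero_le_power2[of "g x + g2 x"] by (simp add: power2_eq_square algebra_simps)
  qed
  also have "\<dots> = (integral {0..1} (\<lambda>x. (g x)\<^sup>2) + integral {0..1} (\<lambda>x. (g2 x)\<^sup>2)) / 2"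
    using g_sq g2_sq by (simp add: Henstock_Kurzweil_Integration.integral_add integral_divide)
  finally show ?thesis .
qed

section \<open>Change of variables\<close>

lemma DERIV_pos_strict_mono:
  fixes X X' :: "real \<Rightarrow> real"
  assumes deriv: "\<And>x. (X has_real_derivative X' x) (at x)" and pos: "\<And>x. X' x > 0"
  shows "strict_mono X"
proof (rule strict_monoI)
  fix a b :: real
  assume "a < b"
  then show "X a < X b"
    by (rule DERIV_pos_imp_increasing) (use deriv pos in blast)
qed

lemma DERIV_pos_image_atLeastAtMost:
  fixes X X' :: "real \<Rightarrow> real"
  assumes deriv: "\<And>x. (X has_real_derivative X' x) (at x)" and pos: "\<And>x. X' x > 0" and ab: "a \<le> b"
  shows "X ` {a..b} = {X a..X b}"
proof
  show "X ` {a..b} \<subseteq> {X a..X b}"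
    using DERIV_pos_strict_mono[OF deriv pos] by (auto simp: strict_mono_less_eq)
  show "{X a..X b} \<subseteq> X ` {a..b}"
  proof
    fix y assume y: "y \<in> {X a..X b}"
    have "continuous_on {a..b} X"
      using deriv by (meson DERIV_continuous continuous_at_imp_continuous_on)
    then obtain x where "a \<le> x" "x \<le> b" "X x = y"
      using IVT'[of X a y b] y ab by auto
    then show "y \<in> X ` {a..b}" by auto
  qed
qed

lemma change_of_variables_increasing:
  fixes X X' f :: "real \<Rightarrow> real"
  assumes deriv: "\<And>x. (X has_real_derivative X' x) (at x)" and pos: "\<And>x. X' x > 0" and ab: "a \<le> b"
    and f: "f absolutely_integrable_on {X a..X b}"
  shows "(\<lambda>x. X' x * f (X x)) absolutely_integrable_on {a..b}"
    and "integral {a..b} (\<lambda>x. X' x * f (X x)) = integral {X a..X b} f"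
proof -
  have image: "X ` {a..b} = {X a..X b}"
    by (rule DERIV_pos_image_atLeastAtMost[OF deriv pos ab])
  have "inj_on X {a..b}"
    using strict_mono_imp_inj_on[OF DERIV_pos_strict_mono[OF deriv pos]] inj_on_subset by blast
  moreover have "\<And>x. x \<in> {a..b} \<Longrightarrow> (X has_field_derivative X' x) (at x within {a..b})"
    using deriv has_field_derivative_at_within by blast
  moreover have "\<bar>X' x\<bar> = X' x" for x
    using pos[of x] by simp
  ultimately show "(\<lambda>x. X' x * f (X x)) absolutely_integrable_on {a..b}"
    and "integral {a..b} (\<lambda>x. X' x * f (X x)) = integral {X a..X b} f"
    using has_absolute_integral_change_of_variables_1'[of "{a..b}" X X' f "integral {X a..X b} f"] f image
    by auto
qed

lemma abs_mult_le_mult: "\<bar>a\<bar> \<le> A \<Longrightarrow> \<bar>b\<bar> \<le> B \<Longrightarrow> \<bar>a * b\<bar> \<le> A * (B :: real)"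
  by (simp add: abs_mult mult_mono')

lemma chain_rule_bounds:
  fixes f' f'' p' p'' B c :: real
  assumes "\<bar>f'\<bar> \<le> B" "\<bar>f''\<bar> \<le> B" "\<bar>p'\<bar> \<le> 1 + c" "\<bar>p''\<bar> \<le> c" "0 \<le> c"
  shows "\<bar>f' * p'\<bar> \<le> B * ((1 + c)\<^sup>2 + (1 + c))"
    and "\<bar>f'' * p' * p' + f' * p''\<bar> \<le> B * ((1 + c)\<^sup>2 + (1 + c))"
proof -
  have B: "0 \<le> B"
    using assms(1) by simp
  have "\<bar>f' * p'\<bar> \<le> B * (1 + c)"
    using assms by (intro abs_mult_le_mult)
  also have "\<dots> \<le> B * ((1 + c)\<^sup>2 + (1 + c))"
    using B assms(5) by (intro mult_left_mono) auto
  finally show "\<bar>f' * p'\<bar> \<le> B * ((1 + c)\<^sup>2 + (1 + c))" .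
  have "\<bar>f'' * p' * p'\<bar> \<le> B * (1 + c) * (1 + c)" "\<bar>f' * p''\<bar> \<le> B * c"
    using assms by (intro abs_mult_le_mult; simp)+
  then show "\<bar>f'' * p' * p' + f' * p''\<bar> \<le> B * ((1 + c)\<^sup>2 + (1 + c))"
    using B by (simp add: power2_eq_square algebra_simps)
qed

lemma square_sum_le:
  fixes p q \<eta> :: real
  assumes "0 < \<eta>"
  shows "(p + q)\<^sup>2 \<le> (1 + \<eta>) * p\<^sup>2 + (1 + 1 / \<eta>) * q\<^sup>2"
proof -
  have "0 \<le> (\<eta> * p - q)\<^sup>2 / \<eta>"
    using assms by simp
  also have "\<dots> = \<eta> * p\<^sup>2 - 2 * p * q + q\<^sup>2 / \<eta>"
    using assms by (simp add: power2_eq_square field_simps)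
  finally show ?thesis
    by (simp add: power2_eq_square algebra_simps)
qed

lemma one_plus_cube_le:
  fixes y :: real
  assumes "0 \<le> y" "y \<le> 1"
  shows "(1 + y) ^ 3 \<le> 1 + 7 * y"
proof -
  have "y * y \<le> y" "y * y * y \<le> y"
    using assms mult_left_le_one_le[of y y] mult_left_le_one_le[of y "y * y"] by auto
  then show ?thesis
    by (simp add: power3_eq_cube algebra_simps)
qed

lemma d2_growth_factors_le:
  fixes d E :: real
  assumes d: "0 < d" "d \<le> 1" and E: "0 \<le> E" "d * E \<le> 1"
  shows "(1 + d) * (1 + d * E) ^ 3 \<le> 1 + d * (1 + 14 * E)"
    and "(1 + 1 / d) * (d * E)\<^sup>2 \<le> 2 * d * E\<^sup>2"
proof -
  have "(1 + d) * (1 + d * E) ^ 3 \<le> (1 + d) * (1 + 7 * (d * E))"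
    using one_plus_cube_le[of "d * E"] d E by (intro mult_left_mono) auto
  also have "\<dots> \<le> 1 + d * (1 + 14 * E)"
    using mult_right_mono[OF d(2), of "7 * d * E"] d E by (simp add: algebra_simps)
  finally show "(1 + d) * (1 + d * E) ^ 3 \<le> 1 + d * (1 + 14 * E)" .
  have "(1 + 1 / d) * (d * E)\<^sup>2 = (d + d * d) * E\<^sup>2"
    using d by (simp add: power2_eq_square field_simps)
  also have "\<dots> \<le> 2 * d * E\<^sup>2"
    using d mult_right_mono[of "d * d" d "E\<^sup>2"] by (simp add: algebra_simps)
  finally show "(1 + 1 / d) * (d * E)\<^sup>2 \<le> 2 * d * E\<^sup>2" .
qed

lemma weighted_growth_le:
  fixes A B A' B' r d E C1 :: real
  assumes A: "0 \<le> A" and B: "0 \<le> B" and r: "0 \<le> r" "r \<le> C1"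
    and d: "0 < d" "d \<le> 1" and E: "0 \<le> E" "d * E \<le> 1"
    and A': "A' \<le> (1 + 2 * (d * E)) * A"
    and B': "B' \<le> (1 + d) * (1 + d * E) ^ 3 * B + (1 + 1 / d) * (d * E)\<^sup>2 * (A + B)"
  shows "A' + r * B' \<le> (1 + (1 + 14 * E + 2 * E\<^sup>2) * (1 + C1) * d)\<^sup>2 * (A + r * B)"
proof -
  define K where "K = 1 + 14 * E + 2 * E\<^sup>2"
  have K: "1 \<le> K" "2 * E \<le> K"
    unfolding K_def using E by auto
  note cube = d2_growth_factors_le(1)[OF d E] and small = d2_growth_factors_le(2)[OF d E]
  have "B' \<le> (1 + d * (1 + 14 * E)) * B + 2 * d * E\<^sup>2 * (A + B)"
    using B' mult_right_mono[OF cube B] mult_right_mono[OF small, of "A + B"] A B by linarith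
  also have "\<dots> \<le> (1 + K * d) * B + K * d * A"
    unfolding K_def using A B d E by (simp add: algebra_simps)
  finally have B'_le: "B' \<le> (1 + K * d) * B + K * d * A" .
  have A'_le: "A' \<le> (1 + K * d) * A"
    using A' mult_right_mono[OF K(2), of "d * A"] A d by (simp add: algebra_simps)
  have "r * B' \<le> r * ((1 + K * d) * B + K * d * A)"
    using B'_le r(1) by (rule mult_left_mono)
  also have "\<dots> \<le> (1 + K * d) * (r * B) + C1 * K * d * A"
    using mult_right_mono[OF r(2), of "K * d * A"] K A d by (simp add: algebra_simps)
  moreover have "0 \<le> C1 * K * d * (r * B)"
    using r K d B by simp
  ultimately have "A' + r * B' \<le> (1 + K * d) * (A + r * B) + C1 * K * d * (A + r * B)"
    using A'_le by (simp add: algebra_simps)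
  also have "\<dots> = (1 + K * (1 + C1) * d) * (A + r * B)"
    by (simp add: algebra_simps)
  also have "\<dots> \<le> (1 + K * (1 + C1) * d)\<^sup>2 * (A + r * B)"
  proof (rule mult_right_mono)
    have "1 + z \<le> (1 + z)\<^sup>2" if "0 \<le> z" for z :: real
      using that mult_nonneg_nonneg[OF that that] by (simp add: power2_eq_square algebra_simps)
    then show "1 + K * (1 + C1) * d \<le> (1 + K * (1 + C1) * d)\<^sup>2"
      using K d r by simp
  qed (use r A B in simp)
  finally show ?thesis
    unfolding K_def .
qed

section \<open>Composition with a lift close to the identity\<close>

locale near_identity_lift =
  fixes X X' X'' :: "real \<Rightarrow> real" and \<epsilon> :: real
  assumes deriv_X: "\<And>x. (X has_real_derivative X' x) (at x)"
    and deriv_X': "\<And>x. (X' has_real_derivative X'' x) (at x)"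
    and cont_X'': "continuous_on UNIV X''"
    and X'_close: "\<And>x. \<bar>X' x - 1\<bar> \<le> \<epsilon>"
    and X''_small: "\<And>x. \<bar>X'' x\<bar> \<le> \<epsilon>"
    and eps_le_half: "\<epsilon> \<le> 1 / 2"
    and X_shift: "\<And>x. X (x + 1) = X x + 1"
begin

lemma eps_nonneg: "0 \<le> \<epsilon>"
  using X'_close[of 0] by simp

lemma X'_ge_half: "1 / 2 \<le> X' x"
  using X'_close[of x] eps_le_half by (auto simp: abs_le_iff)

lemma X'_pos: "0 < X' x"
  using X'_ge_half[of x] by simp

lemma X'_le: "X' x \<le> 1 + \<epsilon>"
  using X'_close[of x] by (auto simp: abs_le_iff)

lemma continuous_X: "continuous_on UNIV X"
  using deriv_X by (meson DERIV_continuous continuous_at_imp_continuous_on)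

lemma continuous_X': "continuous_on UNIV X'"
  using deriv_X' by (meson DERIV_continuous continuous_at_imp_continuous_on)

lemma integral_pullback_periodic:
  fixes f :: "real \<Rightarrow> real"
  assumes per: "periodic1 f" and f: "f absolutely_integrable_on {0..1}"
  shows "(\<lambda>x. X' x * f (X x)) absolutely_integrable_on {0..1}"
    and "integral {0..1} (\<lambda>x. X' x * f (X x)) = integral {0..1} f"
proof -
  have X1: "X 1 = X 0 + 1"
    using X_shift[of 0] by simp
  have "periodic1 (\<lambda>y. \<bar>f y\<bar>)"
    using per by (simp add: periodic1_def)
  then have "f integrable_on {X 0..X 1}" "(\<lambda>y. \<bar>f y\<bar>) integrable_on {X 0..X 1}"
    using f periodic1_integrable_on[OF per] periodic1_integrable_on[of "\<lambda>y. \<bar>f y\<bar>"]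
    by (auto simp: absolutely_integrable_on_def)
  then have f_abs: "f absolutely_integrable_on {X 0..X 1}"
    by (rule abs_absolutely_integrableI_1)
  show "(\<lambda>x. X' x * f (X x)) absolutely_integrable_on {0..1}"
    by (rule change_of_variables_increasing(1)[OF deriv_X X'_pos _ f_abs]) simp
  have "integral {0..1} (\<lambda>x. X' x * f (X x)) = integral {X 0..X 1} f"
    by (rule change_of_variables_increasing(2)[OF deriv_X X'_pos _ f_abs]) simp
  also have "\<dots> = integral {0..1} f"
    unfolding X1 using f by (intro periodic1_integral_unit_interval[OF per]) (simp add: absolutely_integrable_on_def)
  finally show "integral {0..1} (\<lambda>x. X' x * f (X x)) = integral {0..1} f" .
qed

lemma weak_derivs_compose:
  assumes derivs: "weak_derivs g g1 g2" and g2_abs: "\<And>a b. g2 absolutely_integrable_on {a..b}"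
  shows "weak_derivs (g \<circ> X) (\<lambda>x. g1 (X x) * X' x) (\<lambda>x. X' x * X' x * g2 (X x) + g1 (X x) * X'' x)"
  unfolding weak_derivs_def
proof (intro conjI allI impI)
  show "((g \<circ> X) has_real_derivative g1 (X x) * X' x) (at x)" for x
    using derivs unfolding weak_derivs_def by (blast intro: DERIV_chain deriv_X)
  fix a b :: real
  assume ab: "a \<le> b"
  define k where "k x = X' x * g2 (X x)" for x
  have k: "(k has_integral g1 (X q) - g1 (X p)) {p..q}" if "p \<le> q" for p q
  proof -
    have "X p \<le> X q"
      using that DERIV_pos_strict_mono[OF deriv_X X'_pos] by (simp add: strict_mono_less_eq)
    then have "integral {X p..X q} g2 = g1 (X q) - g1 (X p)"
      using derivs unfolding weak_derivs_def by (simp add: integral_unique)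
    moreover have "integral {p..q} k = integral {X p..X q} g2"
      unfolding k_def by (rule change_of_variables_increasing(2)[OF deriv_X X'_pos that g2_abs])
    moreover have "k integrable_on {p..q}"
      using change_of_variables_increasing(1)[OF deriv_X X'_pos that g2_abs]
      unfolding k_def by (simp add: absolutely_integrable_on_def)
    ultimately show ?thesis by (metis has_integral_integrable_integral)
  qed
  have "((\<lambda>x. k x * X' x + g1 (X x) * X'' x) has_integral
      g1 (X b) * X' b - g1 (X a) * X' a) {a..b}"
  proof (rule integration_by_parts_primitive[OF ab])
    show "k absolutely_integrable_on {a..b}"
      unfolding k_def by (rule change_of_variables_increasing(1)[OF deriv_X X'_pos ab g2_abs])
    show "continuous_on {a..b} X''"
      using cont_X'' by (rule continuous_on_subset) simp
  qed (use k deriv_X' in auto)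
  then show "((\<lambda>x. X' x * X' x * g2 (X x) + g1 (X x) * X'' x) has_integral
      g1 (X b) * X' b - g1 (X a) * X' a) {a..b}"
    unfolding k_def by (simp add: mult_ac)
qed

lemma integral_square_compose_le:
  assumes per: "periodic1 g" and cont: "continuous_on UNIV g"
  shows "integral {0..1} (\<lambda>x. (g (X x))\<^sup>2) \<le> (1 + 2 * \<epsilon>) * integral {0..1} (\<lambda>x. (g x)\<^sup>2)"
proof -
  have "(\<lambda>y. (g y)\<^sup>2) absolutely_integrable_on {0..1}"
    by (intro nonnegative_absolutely_integrable_1 integrable_continuous_real continuous_intros
        continuous_on_subset[OF cont]) auto
  moreover have "periodic1 (\<lambda>y. (g y)\<^sup>2)"
    using per by (simp add: periodic1_def)
  ultimately have pullback: "(\<lambda>x. X' x * (g (X x))\<^sup>2) absolutely_integrable_on {0..1}"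
    "integral {0..1} (\<lambda>x. X' x * (g (X x))\<^sup>2) = integral {0..1} (\<lambda>x. (g x)\<^sup>2)"
    using integral_pullback_periodic by blast+
  have "integral {0..1} (\<lambda>x. (g (X x))\<^sup>2) \<le> integral {0..1} (\<lambda>x. (1 + 2 * \<epsilon>) * (X' x * (g (X x))\<^sup>2))"
  proof (rule integral_le)
    have "continuous_on UNIV (\<lambda>x. (g (X x))\<^sup>2)"
      by (intro continuous_on_power continuous_on_compose2[OF cont continuous_X]) auto
    then show "(\<lambda>x. (g (X x))\<^sup>2) integrable_on {0..1}"
      by (rule integrable_continuous_real[OF continuous_on_subset]) auto
    show "(\<lambda>x. (1 + 2 * \<epsilon>) * (X' x * (g (X x))\<^sup>2)) integrable_on {0..1}"
      using integrable_on_cmult_left[OF set_lebesgue_integral_eq_integral(1)[OF pullback(1)], of "1 + 2 * \<epsilon>"]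
      by simp
    fix x
    have "1 \<le> (1 + 2 * \<epsilon>) * (1 - \<epsilon>)"
      using eps_nonneg eps_le_half mult_nonneg_nonneg[of \<epsilon> "1 - 2 * \<epsilon>"] by (simp add: algebra_simps)
    also have "\<dots> \<le> (1 + 2 * \<epsilon>) * X' x"
      using X'_close[of x] eps_nonneg by (intro mult_left_mono) (auto simp: abs_le_iff)
    finally show "(g (X x))\<^sup>2 \<le> (1 + 2 * \<epsilon>) * (X' x * (g (X x))\<^sup>2)"
      using mult_right_mono[of 1 "(1 + 2 * \<epsilon>) * X' x" "(g (X x))\<^sup>2"] by (simp add: mult_ac)
  qed
  also have "\<dots> = (1 + 2 * \<epsilon>) * integral {0..1} (\<lambda>x. (g x)\<^sup>2)"
    using pullback(2) by simp
  finally show ?thesis .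
qed

lemma weak_d2_compose_integrable:
  assumes g1_cont: "continuous_on UNIV g1" and per2: "periodic1 g2"
    and g2_abs: "\<And>a b. g2 absolutely_integrable_on {a..b}"
    and g2_sq: "(\<lambda>x. (g2 x)\<^sup>2) integrable_on {0..1}"
  shows "(\<lambda>x. X' x ^ 3 * (X' x * (g2 (X x))\<^sup>2)) absolutely_integrable_on {0..1}"
    and "(\<lambda>x. (g1 (X x) * X'' x)\<^sup>2) integrable_on {0..1}"
    and "(\<lambda>x. (X' x * X' x * g2 (X x) + g1 (X x) * X'' x)\<^sup>2) integrable_on {0..1}"
proof -
  have "periodic1 (\<lambda>y. (g2 y)\<^sup>2)"
    using per2 by (simp add: periodic1_def)
  moreover have "(\<lambda>y. (g2 y)\<^sup>2) absolutely_integrable_on {0..1}"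
    using g2_sq by (intro nonnegative_absolutely_integrable_1) auto
  ultimately have h: "(\<lambda>x. X' x * (g2 (X x))\<^sup>2) absolutely_integrable_on {0..1}"
    by (rule integral_pullback_periodic(1))
  have k: "(\<lambda>x. X' x * g2 (X x)) absolutely_integrable_on {0..1}"
    by (rule change_of_variables_increasing(1)[OF deriv_X X'_pos _ g2_abs]) simp
  have q_cont: "continuous_on UNIV (\<lambda>x. g1 (X x) * X'' x)"
    by (intro continuous_intros continuous_on_compose2[OF g1_cont continuous_X] cont_X'') auto
  show t1: "(\<lambda>x. X' x ^ 3 * (X' x * (g2 (X x))\<^sup>2)) absolutely_integrable_on {0..1}"
    by (rule absolutely_integrable_continuous_mult[OF h])
      (intro continuous_intros continuous_on_subset[OF continuous_X'], simp)
  have t2: "(\<lambda>x. (2 * X' x * (g1 (X x) * X'' x)) * (X' x * g2 (X x))) absolutely_integrable_on {0..1}"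
    by (rule absolutely_integrable_continuous_mult[OF k])
      (intro continuous_intros continuous_on_subset[OF continuous_X'] continuous_on_subset[OF q_cont], auto)
  show t3: "(\<lambda>x. (g1 (X x) * X'' x)\<^sup>2) integrable_on {0..1}"
    by (intro integrable_continuous_real continuous_on_power continuous_on_subset[OF q_cont]) auto
  have "(\<lambda>x. X' x ^ 3 * (X' x * (g2 (X x))\<^sup>2) + (2 * X' x * (g1 (X x) * X'' x)) * (X' x * g2 (X x))
      + (g1 (X x) * X'' x)\<^sup>2) integrable_on {0..1}"
    using set_lebesgue_integral_eq_integral(1)[OF t1] set_lebesgue_integral_eq_integral(1)[OF t2] t3
    by (intro Henstock_Kurzweil_Integration.integrable_add)
  then show "(\<lambda>x. (X' x * X' x * g2 (X x) + g1 (X x) * X'' x)\<^sup>2) integrable_on {0..1}"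
    by (simp add: power2_eq_square power3_eq_cube algebra_simps)
qed

lemma integral_cube_pullback_le:
  assumes per2: "periodic1 g2" and g2_sq: "(\<lambda>x. (g2 x)\<^sup>2) integrable_on {0..1}"
  shows "integral {0..1} (\<lambda>x. X' x ^ 3 * (X' x * (g2 (X x))\<^sup>2))
    \<le> (1 + \<epsilon>) ^ 3 * integral {0..1} (\<lambda>x. (g2 x)\<^sup>2)"
proof -
  define h where "h x = X' x * (g2 (X x))\<^sup>2" for x
  have "periodic1 (\<lambda>y. (g2 y)\<^sup>2)"
    using per2 by (simp add: periodic1_def)
  moreover have "(\<lambda>y. (g2 y)\<^sup>2) absolutely_integrable_on {0..1}"
    by (rule nonnegative_absolutely_integrable_1[OF g2_sq]) simp
  ultimately have h: "h absolutely_integrable_on {0..1}" "integral {0..1} h = integral {0..1} (\<lambda>x. (g2 x)\<^sup>2)"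
    unfolding h_def[abs_def] using integral_pullback_periodic by blast+
  have "integral {0..1} (\<lambda>x. X' x ^ 3 * h x) \<le> integral {0..1} (\<lambda>x. (1 + \<epsilon>) ^ 3 * h x)"
  proof (rule integral_le)
    show "(\<lambda>x. X' x ^ 3 * h x) integrable_on {0..1}"
      by (intro set_lebesgue_integral_eq_integral(1) absolutely_integrable_continuous_mult[OF h(1)]
          continuous_intros continuous_on_subset[OF continuous_X']) simp
    show "(\<lambda>x. (1 + \<epsilon>) ^ 3 * h x) integrable_on {0..1}"
      using integrable_on_cmult_left[OF set_lebesgue_integral_eq_integral(1)[OF h(1)]] by simp
    show "X' x ^ 3 * h x \<le> (1 + \<epsilon>) ^ 3 * h x" for x
      using X'_le[of x] X'_pos[of x] unfolding h_def
      by (intro mult_right_mono power_mono) auto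
  qed
  then show ?thesis
    using h(2) unfolding h_def by simp
qed

lemma integral_square_derivative_term_le:
  assumes g1_cont: "continuous_on UNIV g1" and per1: "periodic1 g1"
  shows "integral {0..1} (\<lambda>x. (g1 (X x) * X'' x)\<^sup>2) \<le> 2 * \<epsilon>\<^sup>2 * integral {0..1} (\<lambda>x. (g1 x)\<^sup>2)"
proof -
  have "periodic1 (\<lambda>y. (g1 y)\<^sup>2)"
    using per1 by (simp add: periodic1_def)
  moreover have "(\<lambda>y. (g1 y)\<^sup>2) absolutely_integrable_on {0..1}"
    by (intro nonnegative_absolutely_integrable_1 integrable_continuous_real continuous_on_power
        continuous_on_subset[OF g1_cont]) auto
  ultimately have pullback: "(\<lambda>x. X' x * (g1 (X x))\<^sup>2) absolutely_integrable_on {0..1}"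
      "integral {0..1} (\<lambda>x. X' x * (g1 (X x))\<^sup>2) = integral {0..1} (\<lambda>x. (g1 x)\<^sup>2)"
    using integral_pullback_periodic by blast+
  have "integral {0..1} (\<lambda>x. (g1 (X x) * X'' x)\<^sup>2) \<le> integral {0..1} (\<lambda>x. 2 * \<epsilon>\<^sup>2 * (X' x * (g1 (X x))\<^sup>2))"
  proof (rule integral_le)
    have "continuous_on UNIV (\<lambda>x. (g1 (X x) * X'' x)\<^sup>2)"
      by (intro continuous_intros continuous_on_compose2[OF g1_cont continuous_X] cont_X'') auto
    then show "(\<lambda>x. (g1 (X x) * X'' x)\<^sup>2) integrable_on {0..1}"
      by (rule integrable_continuous_real[OF continuous_on_subset]) auto
    show "(\<lambda>x. 2 * \<epsilon>\<^sup>2 * (X' x * (g1 (X x))\<^sup>2)) integrable_on {0..1}"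
      using integrable_on_cmult_left[OF set_lebesgue_integral_eq_integral(1)[OF pullback(1)]] by simp
    fix x
    have "(X'' x)\<^sup>2 \<le> \<epsilon>\<^sup>2"
      using power_mono[OF X''_small abs_ge_zero, of x 2] by simp
    also have "\<dots> \<le> 2 * \<epsilon>\<^sup>2 * X' x"
      using X'_ge_half[of x] mult_left_mono[of 1 "2 * X' x" "\<epsilon>\<^sup>2"] by simp
    finally have "(X'' x)\<^sup>2 * (g1 (X x))\<^sup>2 \<le> 2 * \<epsilon>\<^sup>2 * X' x * (g1 (X x))\<^sup>2"
      by (rule mult_right_mono) simp
    then show "(g1 (X x) * X'' x)\<^sup>2 \<le> 2 * \<epsilon>\<^sup>2 * (X' x * (g1 (X x))\<^sup>2)"
      by (simp add: power_mult_distrib mult_ac)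
  qed
  then show ?thesis
    using pullback(2) by simp
qed

lemma integral_square_weak_d2_compose_le:
  assumes g1_cont: "continuous_on UNIV g1" and per1: "periodic1 g1" and per2: "periodic1 g2"
    and g2_abs: "\<And>a b. g2 absolutely_integrable_on {a..b}"
    and g2_sq: "(\<lambda>x. (g2 x)\<^sup>2) integrable_on {0..1}" and \<eta>: "0 < \<eta>"
  shows "integral {0..1} (\<lambda>x. (X' x * X' x * g2 (X x) + g1 (X x) * X'' x)\<^sup>2)
    \<le> (1 + \<eta>) * (1 + \<epsilon>) ^ 3 * integral {0..1} (\<lambda>x. (g2 x)\<^sup>2)
       + (1 + 1 / \<eta>) * (2 * \<epsilon>\<^sup>2) * integral {0..1} (\<lambda>x. (g1 x)\<^sup>2)"
proof -
  define p where "p x = X' x ^ 3 * (X' x * (g2 (X x))\<^sup>2)" for x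
  define q where "q x = g1 (X x) * X'' x" for x
  note parts = weak_d2_compose_integrable[OF g1_cont per2 g2_abs g2_sq, folded p_def q_def]
  have p_int: "p integrable_on {0..1}"
    using set_lebesgue_integral_eq_integral(1)[OF parts(1)] .
  have "integral {0..1} (\<lambda>x. (X' x * X' x * g2 (X x) + q x)\<^sup>2)
      \<le> integral {0..1} (\<lambda>x. (1 + \<eta>) * p x + (1 + 1 / \<eta>) * (q x)\<^sup>2)"
  proof (rule integral_le)
    show "(\<lambda>x. (X' x * X' x * g2 (X x) + q x)\<^sup>2) integrable_on {0..1}"
      using parts(3) by (simp add: q_def)
    show "(\<lambda>x. (1 + \<eta>) * p x + (1 + 1 / \<eta>) * (q x)\<^sup>2) integrable_on {0..1}"
      using integrable_on_cmult_left[OF p_int, of "1 + \<eta>"] integrable_on_cmult_left[OF parts(2), of "1 + 1 / \<eta>"]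
      by (intro Henstock_Kurzweil_Integration.integrable_add) simp_all
    show "(X' x * X' x * g2 (X x) + q x)\<^sup>2 \<le> (1 + \<eta>) * p x + (1 + 1 / \<eta>) * (q x)\<^sup>2" for x
      using square_sum_le[OF \<eta>, of "X' x * X' x * g2 (X x)" "q x"]
      by (simp add: p_def power2_eq_square power3_eq_cube mult_ac)
  qed
  also have "\<dots> = (1 + \<eta>) * integral {0..1} p + (1 + 1 / \<eta>) * integral {0..1} (\<lambda>x. (q x)\<^sup>2)"
    using integrable_on_cmult_left[OF p_int, of "1 + \<eta>"] integrable_on_cmult_left[OF parts(2), of "1 + 1 / \<eta>"]
    by (simp add: Henstock_Kurzweil_Integration.integral_add)
  also have "\<dots> \<le> (1 + \<eta>) * ((1 + \<epsilon>) ^ 3 * integral {0..1} (\<lambda>x. (g2 x)\<^sup>2))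
      + (1 + 1 / \<eta>) * (2 * \<epsilon>\<^sup>2 * integral {0..1} (\<lambda>x. (g1 x)\<^sup>2))"
    using integral_cube_pullback_le[OF per2 g2_sq] integral_square_derivative_term_le[OF g1_cont per1] \<eta>
    unfolding p_def[abs_def] q_def by (intro add_mono mult_left_mono) auto
  finally show ?thesis
    unfolding q_def by (simp add: mult.assoc)
qed

lemma periodic1_compose: "periodic1 g \<Longrightarrow> periodic1 (g \<circ> X)"
  by (simp add: periodic1_def X_shift)

lemma H2_per_compose:
  assumes "H2_per g"
  shows "H2_per (g \<circ> X)"
proof -
  obtain g1 g2 where derivs: "weak_derivs g g1 g2" and per: "periodic1 g" "periodic1 g2"
    and g2_abs: "\<And>a b. g2 absolutely_integrable_on {a..b}" and g2_sq: "(\<lambda>x. (g2 x)\<^sup>2) integrable_on {0..1}"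
    using H2_per_weak_derivsE[OF assms] by metis
  show ?thesis
    unfolding H2_per_def weak_d2_iff_weak_derivs
    using periodic1_compose[OF per(1)] weak_derivs_compose[OF derivs g2_abs]
      weak_d2_compose_integrable(3)[OF weak_derivs_continuous[OF derivs] per(2) g2_abs g2_sq]
    by blast
qed

lemma L2_norm_compose_le:
  assumes "H2_per g"
  shows "(L2_norm (g \<circ> X))\<^sup>2 \<le> (1 + 2 * \<epsilon>) * (L2_norm g)\<^sup>2"
proof -
  obtain g1 g2 where derivs: "weak_derivs g g1 g2" and per: "periodic1 g"
    using H2_per_weak_derivsE[OF assms] by metis
  have "continuous_on UNIV g"
    using derivs unfolding weak_derivs_def by (meson DERIV_continuous continuous_at_imp_continuous_on)
  then show ?thesis
    unfolding L2_norm_square using integral_square_compose_le[OF per] by simp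
qed

lemma L2_norm_d2_compose_le:
  assumes "H2_per g" and \<eta>: "0 < \<eta>"
  shows "(L2_norm (d2 (g \<circ> X)))\<^sup>2 \<le> (1 + \<eta>) * (1 + \<epsilon>) ^ 3 * (L2_norm (d2 g))\<^sup>2
           + (1 + 1 / \<eta>) * \<epsilon>\<^sup>2 * ((L2_norm g)\<^sup>2 + (L2_norm (d2 g))\<^sup>2)"
proof -
  obtain g1 g2 where derivs: "weak_derivs g g1 g2" and per: "periodic1 g" "periodic1 g1" "periodic1 g2"
    and g2_abs: "\<And>a b. g2 absolutely_integrable_on {a..b}" and g2_sq: "(\<lambda>x. (g2 x)\<^sup>2) integrable_on {0..1}"
    and d2_g: "integral {0..1} (\<lambda>x. (d2 g x)\<^sup>2) = integral {0..1} (\<lambda>x. (g2 x)\<^sup>2)"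
    using H2_per_weak_derivsE[OF assms(1)] by metis
  have g1_cont: "continuous_on UNIV g1"
    by (rule weak_derivs_continuous[OF derivs])
  have d2_gX: "integral {0..1} (\<lambda>x. (d2 (g \<circ> X) x)\<^sup>2)
      = integral {0..1} (\<lambda>x. (X' x * X' x * g2 (X x) + g1 (X x) * X'' x)\<^sup>2)"
    by (rule integral_d2_square[OF weak_derivs_compose[OF derivs g2_abs]
          weak_d2_compose_integrable(3)[OF g1_cont per(3) g2_abs g2_sq]])
  have "2 * integral {0..1} (\<lambda>x. (g1 x)\<^sup>2)
      \<le> integral {0..1} (\<lambda>x. (g x)\<^sup>2) + integral {0..1} (\<lambda>x. (g2 x)\<^sup>2)"
    using integral_derivative_square_le[OF derivs per(1,2) g2_abs g2_sq] by simp
  from mult_left_mono[OF this, of "(1 + 1 / \<eta>) * \<epsilon>\<^sup>2"]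
  have "(1 + 1 / \<eta>) * (2 * \<epsilon>\<^sup>2) * integral {0..1} (\<lambda>x. (g1 x)\<^sup>2)
      \<le> (1 + 1 / \<eta>) * \<epsilon>\<^sup>2 * (integral {0..1} (\<lambda>x. (g x)\<^sup>2) + integral {0..1} (\<lambda>x. (g2 x)\<^sup>2))"
    using \<eta> by (simp add: mult_ac)
  then show ?thesis
    using integral_square_weak_d2_compose_le[OF g1_cont per(2,3) g2_abs g2_sq \<eta>]
    unfolding L2_norm_square d2_gX d2_g by linarith
qed

lemma H2_hdt_norm_compose_le:
  assumes H: "H2_per g" and eps: "\<epsilon> = d * E" and d: "0 < d" "d \<le> 1" and E: "0 \<le> E"
    and dt: "0 < dt" and h: "h ^ 4 \<le> C1 * dt"
  shows "H2_hdt_norm h dt (g \<circ> X) \<le> (1 + (1 + 14 * E + 2 * E\<^sup>2) * (1 + C1) * d) * H2_hdt_norm h dt g"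
proof -
  define r where "r = h ^ 4 / dt"
  have r: "0 \<le> r" "r \<le> C1"
    unfolding r_def using dt h by (simp_all add: divide_le_eq)
  have "(L2_norm (g \<circ> X))\<^sup>2 + r * (L2_norm (d2 (g \<circ> X)))\<^sup>2
      \<le> (1 + (1 + 14 * E + 2 * E\<^sup>2) * (1 + C1) * d)\<^sup>2 * ((L2_norm g)\<^sup>2 + r * (L2_norm (d2 g))\<^sup>2)"
    using L2_norm_compose_le[OF H] L2_norm_d2_compose_le[OF H d(1)] eps_le_half d E r
    unfolding eps by (intro weighted_growth_le) simp_all
  from real_sqrt_le_mono[OF this] show ?thesis
    using d E r unfolding H2_hdt_norm_def r_def by (simp add: real_sqrt_mult)
qed

end

section \<open>The Runge-Kutta foot map\<close>

definition periodic_C2_bounded :: "(real \<Rightarrow> real) \<Rightarrow> real \<Rightarrow> bool" where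
  "periodic_C2_bounded V c \<longleftrightarrow> periodic1 V \<and>
     (\<exists>V' V''. (\<forall>x. (V has_real_derivative V' x) (at x)) \<and> (\<forall>x. (V' has_real_derivative V'' x) (at x)) \<and>
        continuous_on UNIV V'' \<and> (\<forall>x. \<bar>V' x\<bar> \<le> c \<and> \<bar>V'' x\<bar> \<le> c))"

lemma periodic_C2_boundedI:
  assumes "periodic1 V" "\<And>x. (V has_real_derivative V' x) (at x)" "\<And>x. (V' has_real_derivative V'' x) (at x)"
    "continuous_on UNIV V''" "\<And>x. \<bar>V' x\<bar> \<le> c" "\<And>x. \<bar>V'' x\<bar> \<le> c"
  shows "periodic_C2_bounded V c"
  using assms unfolding periodic_C2_bounded_def by blast

lemma periodic_C2_bounded_nonneg: "periodic_C2_bounded V c \<Longrightarrow> 0 \<le> c"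
  unfolding periodic_C2_bounded_def by (meson abs_ge_zero order_trans)

lemma periodic_C2_bounded_zero: "periodic_C2_bounded (\<lambda>x. 0) 0"
  by (rule periodic_C2_boundedI[where V' = "\<lambda>x. 0" and V'' = "\<lambda>x. 0"]) (auto simp: periodic1_def)

lemma periodic_C2_bounded_add:
  assumes "periodic_C2_bounded V c" and "periodic_C2_bounded W c'"
  shows "periodic_C2_bounded (\<lambda>x. V x + W x) (c + c')"
proof -
  obtain V' V'' W' W'' where V: "\<And>x. (V has_real_derivative V' x) (at x)" "\<And>x. (V' has_real_derivative V'' x) (at x)"
      "continuous_on UNIV V''" "\<And>x. \<bar>V' x\<bar> \<le> c \<and> \<bar>V'' x\<bar> \<le> c"
    and W: "\<And>x. (W has_real_derivative W' x) (at x)" "\<And>x. (W' has_real_derivative W'' x) (at x)"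
      "continuous_on UNIV W''" "\<And>x. \<bar>W' x\<bar> \<le> c' \<and> \<bar>W'' x\<bar> \<le> c'"
    using assms unfolding periodic_C2_bounded_def by metis
  show ?thesis
  proof (rule periodic_C2_boundedI[where V' = "\<lambda>x. V' x + W' x" and V'' = "\<lambda>x. V'' x + W'' x"])
    show "periodic1 (\<lambda>x. V x + W x)"
      using assms unfolding periodic_C2_bounded_def periodic1_def by simp
    show "continuous_on UNIV (\<lambda>x. V'' x + W'' x)"
      using V(3) W(3) by (rule continuous_on_add)
    show "\<bar>V' x + W' x\<bar> \<le> c + c'" "\<bar>V'' x + W'' x\<bar> \<le> c + c'" for x
      using V(4)[of x] W(4)[of x] by linarith+
  qed (use V W in \<open>auto intro: DERIV_add\<close>)
qed

lemma periodic_C2_bounded_cmult: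
  assumes "periodic_C2_bounded V c"
  shows "periodic_C2_bounded (\<lambda>x. a * V x) (\<bar>a\<bar> * c)"
proof -
  obtain V' V'' where V: "\<And>x. (V has_real_derivative V' x) (at x)" "\<And>x. (V' has_real_derivative V'' x) (at x)"
      "continuous_on UNIV V''" "\<And>x. \<bar>V' x\<bar> \<le> c \<and> \<bar>V'' x\<bar> \<le> c"
    using assms unfolding periodic_C2_bounded_def by metis
  show ?thesis
  proof (rule periodic_C2_boundedI[where V' = "\<lambda>x. a * V' x" and V'' = "\<lambda>x. a * V'' x"])
    show "periodic1 (\<lambda>x. a * V x)"
      using assms unfolding periodic_C2_bounded_def periodic1_def by simp
    show "continuous_on UNIV (\<lambda>x. a * V'' x)"
      using V(3) by (intro continuous_intros)
    show "\<bar>a * V' x\<bar> \<le> \<bar>a\<bar> * c" "\<bar>a * V'' x\<bar> \<le> \<bar>a\<bar> * c" for x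
      using V(4)[of x] by (simp_all add: abs_mult mult_left_mono)
  qed (use V in \<open>auto intro: DERIV_cmult\<close>)
qed

lemma periodic_C2_bounded_mono:
  "periodic_C2_bounded V c \<Longrightarrow> c \<le> c' \<Longrightarrow> periodic_C2_bounded V c'"
  unfolding periodic_C2_bounded_def by (meson order_trans)

lemma periodic_C2_bounded_identity_minus:
  assumes "periodic_C2_bounded V c"
  obtains P' P'' where "\<And>x. ((\<lambda>x. x - a * V x) has_real_derivative P' x) (at x)"
    "\<And>x. (P' has_real_derivative P'' x) (at x)" "continuous_on UNIV P''"
    "\<And>x. \<bar>P' x - 1\<bar> \<le> \<bar>a\<bar> * c" "\<And>x. \<bar>P'' x\<bar> \<le> \<bar>a\<bar> * c"
    "\<And>x. x + 1 - a * V (x + 1) = x - a * V x + 1"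
proof -
  obtain V' V'' where dV: "\<And>x. (V has_real_derivative V' x) (at x)"
      and dV': "\<And>x. (V' has_real_derivative V'' x) (at x)" and cV'': "continuous_on UNIV V''"
      and bV: "\<And>x. \<bar>V' x\<bar> \<le> c \<and> \<bar>V'' x\<bar> \<le> c"
    using assms unfolding periodic_C2_bounded_def by metis
  show ?thesis
  proof (rule that[of "\<lambda>x. 1 - a * V' x" "\<lambda>x. - (a * V'' x)"])
    show "((\<lambda>x. x - a * V x) has_real_derivative 1 - a * V' x) (at x)" for x
      using DERIV_diff[OF DERIV_ident DERIV_cmult[OF dV]] by simp
    show "((\<lambda>x. 1 - a * V' x) has_real_derivative - (a * V'' x)) (at x)" for x
      using DERIV_diff[OF DERIV_const DERIV_cmult[OF dV']] by simp
    show "continuous_on UNIV (\<lambda>x. - (a * V'' x))"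
      by (intro continuous_intros cV'')
    show "\<bar>1 - a * V' x - 1\<bar> \<le> \<bar>a\<bar> * c" "\<bar>- (a * V'' x)\<bar> \<le> \<bar>a\<bar> * c" for x
      using bV[of x] by (simp_all add: abs_mult mult_left_mono)
    show "x + 1 - a * V (x + 1) = x - a * V x + 1" for x
      using assms unfolding periodic_C2_bounded_def periodic1_def by simp
  qed
qed

lemma near_identity_lift_minus:
  assumes V: "periodic_C2_bounded V E" and d: "0 < d" "d * E \<le> 1 / 2"
  obtains X' X'' where "near_identity_lift (\<lambda>x. x - d * V x) X' X'' (d * E)"
proof -
  obtain X' X'' where "\<And>x. ((\<lambda>x. x - d * V x) has_real_derivative X' x) (at x)"
    "\<And>x. (X' has_real_derivative X'' x) (at x)" "continuous_on UNIV X''"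
    "\<And>x. \<bar>X' x - 1\<bar> \<le> \<bar>d\<bar> * E" "\<And>x. \<bar>X'' x\<bar> \<le> \<bar>d\<bar> * E"
    "\<And>x. x + 1 - d * V (x + 1) = x - d * V x + 1"
    by (rule periodic_C2_bounded_identity_minus[OF V, where a = d]) blast
  with d have "near_identity_lift (\<lambda>x. x - d * V x) X' X'' (d * E)"
    by unfold_locales simp_all
  then show ?thesis by (rule that)
qed

lemma continuous_on_compose_slice:
  fixes f :: "real \<Rightarrow> real \<Rightarrow> real"
  assumes "continuous_on (UNIV \<times> {0..T}) (\<lambda>(x, t). f x t)" and "s \<in> {0..T}"
    and "continuous_on UNIV P"
  shows "continuous_on UNIV (\<lambda>x. f (P x) s)"
proof -
  have "continuous_on UNIV (\<lambda>x. (\<lambda>(x, t). f x t) (P x, s))"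
    by (rule continuous_on_compose2[OF assms(1)]) (use assms(2) in \<open>auto intro!: continuous_intros assms(3)\<close>)
  then show ?thesis by simp
qed

locale velocity =
  fixes u ux uxx :: "real \<Rightarrow> real \<Rightarrow> real" and T :: real
  assumes u_per: "\<And>x t. u (x + 1) t = u x t"
    and u_dx: "\<And>x t. t \<in> {0..T} \<Longrightarrow> ((\<lambda>y. u y t) has_real_derivative ux x t) (at x)"
    and ux_dx: "\<And>x t. t \<in> {0..T} \<Longrightarrow> ((\<lambda>y. ux y t) has_real_derivative uxx x t) (at x)"
    and ux_cont: "continuous_on (UNIV \<times> {0..T}) (\<lambda>(x, t). ux x t)"
    and uxx_cont: "continuous_on (UNIV \<times> {0..T}) (\<lambda>(x, t). uxx x t)"
begin

lemma derivative_bounds: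
  obtains B where "0 \<le> B" "\<And>x t. t \<in> {0..T} \<Longrightarrow> \<bar>ux x t\<bar> \<le> B \<and> \<bar>uxx x t\<bar> \<le> B"
proof -
  have ux_per: "periodic1 (\<lambda>y. ux y t)" if t: "t \<in> {0..T}" for t
  proof (rule periodic1_derivative)
    show "periodic1 (\<lambda>y. u y t)" by (simp add: periodic1_def u_per)
  qed (rule u_dx[OF t])
  have uxx_per: "periodic1 (\<lambda>y. uxx y t)" if t: "t \<in> {0..T}" for t
    by (rule periodic1_derivative[OF ux_per[OF t] ux_dx[OF t]])
  obtain B1 where B1: "\<And>x t. t \<in> {0..T} \<Longrightarrow> \<bar>ux x t\<bar> \<le> B1"
    using periodic_bounded_on_strip[OF ux_cont] ux_per unfolding periodic1_def by blast
  obtain B2 where B2: "\<And>x t. t \<in> {0..T} \<Longrightarrow> \<bar>uxx x t\<bar> \<le> B2"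
    using periodic_bounded_on_strip[OF uxx_cont] uxx_per unfolding periodic1_def by blast
  have "\<bar>ux x t\<bar> \<le> max 0 (max B1 B2) \<and> \<bar>uxx x t\<bar> \<le> max 0 (max B1 B2)"
    if "t \<in> {0..T}" for x t
    using B1[OF that, of x] B2[OF that, of x] by linarith
  then show ?thesis by (intro that[of "max 0 (max B1 B2)"]) auto
qed

lemma periodic_C2_bounded_velocity_along:
  assumes B: "\<And>x t. t \<in> {0..T} \<Longrightarrow> \<bar>ux x t\<bar> \<le> B \<and> \<bar>uxx x t\<bar> \<le> B"
    and V: "periodic_C2_bounded V c" and a: "\<bar>a\<bar> \<le> 1" and s: "s \<in> {0..T}"
  shows "periodic_C2_bounded (\<lambda>x. u (x - a * V x) s) (B * ((1 + c)\<^sup>2 + (1 + c)))"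
proof -
  define P where "P x = x - a * V x" for x
  obtain P' P'' where dP: "\<And>x. (P has_real_derivative P' x) (at x)"
    and dP': "\<And>x. (P' has_real_derivative P'' x) (at x)" and cP'': "continuous_on UNIV P''"
    and close: "\<And>x. \<bar>P' x - 1\<bar> \<le> \<bar>a\<bar> * c" and small: "\<And>x. \<bar>P'' x\<bar> \<le> \<bar>a\<bar> * c"
    and shift: "\<And>x. P (x + 1) = P x + 1"
    unfolding P_def[abs_def] by (rule periodic_C2_bounded_identity_minus[OF V, where a = a]) blast
  have c: "0 \<le> c"
    by (rule periodic_C2_bounded_nonneg[OF V])
  have "\<bar>a\<bar> * c \<le> c"
    using mult_right_mono[OF a c] by simp
  then have bP: "\<bar>P' x\<bar> \<le> 1 + c" "\<bar>P'' x\<bar> \<le> c" for x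
    using close[of x] small[of x] by (auto simp: abs_le_iff)
  show ?thesis
    unfolding P_def[symmetric]
  proof (rule periodic_C2_boundedI[where V' = "\<lambda>x. ux (P x) s * P' x"
        and V'' = "\<lambda>x. uxx (P x) s * P' x * P' x + ux (P x) s * P'' x"])
    show "periodic1 (\<lambda>x. u (P x) s)"
      unfolding periodic1_def shift by (simp add: u_per)
    show "((\<lambda>x. u (P x) s) has_real_derivative ux (P x) s * P' x) (at x)" for x
      using DERIV_chain2[OF u_dx[OF s] dP] by simp
    show "((\<lambda>x. ux (P x) s * P' x) has_real_derivative uxx (P x) s * P' x * P' x + ux (P x) s * P'' x) (at x)" for x
      using DERIV_mult[OF DERIV_chain2[OF ux_dx[OF s] dP] dP'] by (simp add: algebra_simps)
    have "continuous_on UNIV P" "continuous_on UNIV P'"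
      using dP dP' by (meson DERIV_continuous continuous_at_imp_continuous_on)+
    then show "continuous_on UNIV (\<lambda>x. uxx (P x) s * P' x * P' x + ux (P x) s * P'' x)"
      by (intro continuous_intros continuous_on_compose_slice[OF uxx_cont s]
          continuous_on_compose_slice[OF ux_cont s] cP'')
    show "\<bar>ux (P x) s * P' x\<bar> \<le> B * ((1 + c)\<^sup>2 + (1 + c))"
      and "\<bar>uxx (P x) s * P' x * P' x + ux (P x) s * P'' x\<bar> \<le> B * ((1 + c)\<^sup>2 + (1 + c))" for x
      using chain_rule_bounds[OF _ _ bP c] B[OF s] by blast+
  qed
qed

lemma Xmap_minus_periodic_C2_bounded:
  obtains E where "0 \<le> E" and "\<And>d t1. 0 < d \<Longrightarrow> d \<le> 1 \<Longrightarrow> 0 \<le> t1 - d \<Longrightarrow> t1 \<le> T \<Longrightarrow>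
    \<exists>V. Xmap u d t1 = (\<lambda>x. x - d * V x) \<and> periodic_C2_bounded V E"
proof -
  obtain B where B0: "0 \<le> B" and B: "\<And>x t. t \<in> {0..T} \<Longrightarrow> \<bar>ux x t\<bar> \<le> B \<and> \<bar>uxx x t\<bar> \<le> B"
    using derivative_bounds by blast
  define stage where "stage c = B * ((1 + c)\<^sup>2 + (1 + c))" for c
  define c1 where "c1 = stage 0"
  define c2 where "c2 = stage c1"
  define c3 where "c3 = stage (c1 + 2 * c2)"
  have "0 \<le> c1" "0 \<le> c2" "0 \<le> c3"
    unfolding c1_def c2_def c3_def stage_def using B0 by simp_all
  then have "0 \<le> c1 + c2 + c3" by simp
  moreover have "\<exists>V. Xmap u d t1 = (\<lambda>x. x - d * V x) \<and> periodic_C2_bounded V (c1 + c2 + c3)"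
    if d: "0 < d" "d \<le> 1" and t1: "0 \<le> t1 - d" "t1 \<le> T" for d t1
  proof -
    have s: "t1 \<in> {0..T}" "t1 - d / 2 \<in> {0..T}" "t1 - d \<in> {0..T}"
      using d t1 by auto
    define k1 where "k1 x = u x t1" for x
    define k2 where "k2 x = u (x - d / 2 * k1 x) (t1 - d / 2)" for x
    define k3 where "k3 x = u (x - d * (- k1 x + 2 * k2 x)) (t1 - d)" for x
    have K1: "periodic_C2_bounded k1 c1"
      using periodic_C2_bounded_velocity_along[OF B periodic_C2_bounded_zero _ s(1), of 0]
      unfolding k1_def[abs_def] c1_def stage_def by simp
    have K2: "periodic_C2_bounded k2 c2"
      using periodic_C2_bounded_velocity_along[OF B K1 _ s(2), of "d / 2"] d
      unfolding k2_def[abs_def] c2_def stage_def by simp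
    have "periodic_C2_bounded (\<lambda>x. - k1 x + 2 * k2 x) (c1 + 2 * c2)"
      using periodic_C2_bounded_add[OF periodic_C2_bounded_cmult[OF K1, of "-1"]
          periodic_C2_bounded_cmult[OF K2, of 2]] by simp
    then have K3: "periodic_C2_bounded k3 c3"
      using periodic_C2_bounded_velocity_along[OF B _ _ s(3), of _ _ d] d
      unfolding k3_def[abs_def] c3_def stage_def by simp
    have "periodic_C2_bounded (\<lambda>x. k1 x / 6 + 4 / 6 * k2 x + k3 x / 6) (c1 / 6 + 4 / 6 * c2 + c3 / 6)"
      using periodic_C2_bounded_add[OF periodic_C2_bounded_add[OF
          periodic_C2_bounded_cmult[OF K1, of "1 / 6"] periodic_C2_bounded_cmult[OF K2, of "4 / 6"]]
          periodic_C2_bounded_cmult[OF K3, of "1 / 6"]] by simp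
    then have "periodic_C2_bounded (\<lambda>x. k1 x / 6 + 4 / 6 * k2 x + k3 x / 6) (c1 + c2 + c3)"
      by (rule periodic_C2_bounded_mono) (use \<open>0 \<le> c1\<close> \<open>0 \<le> c2\<close> \<open>0 \<le> c3\<close> in simp)
    moreover have "Xmap u d t1 = (\<lambda>x. x - d * (k1 x / 6 + 4 / 6 * k2 x + k3 x / 6))"
      unfolding Xmap_def k1_def k2_def k3_def by (simp add: Let_def)
    ultimately show ?thesis
      by (intro exI[of _ "\<lambda>x. k1 x / 6 + 4 / 6 * k2 x + k3 x / 6"]) simp
  qed
  ultimately show ?thesis by (rule that)
qed

lemma Xmap_H2_estimate:
  assumes C1: "0 \<le> C1"
  obtains C \<delta> where "0 < C" "0 < \<delta>"
    "\<And>d t1 dt h g. 0 < d \<Longrightarrow> d \<le> \<delta> \<Longrightarrow> 0 \<le> t1 - d \<Longrightarrow> t1 \<le> T \<Longrightarrow> d \<le> dt \<Longrightarrow> h ^ 4 \<le> C1 * dt \<Longrightarrow>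
      H2_per g \<Longrightarrow> H2_per (g \<circ> Xmap u d t1) \<and>
        H2_hdt_norm h dt (g \<circ> Xmap u d t1) \<le> (1 + C * d) * H2_hdt_norm h dt g"
proof -
  obtain E where E: "0 \<le> E" and foot: "\<And>d t1. 0 < d \<Longrightarrow> d \<le> 1 \<Longrightarrow> 0 \<le> t1 - d \<Longrightarrow> t1 \<le> T \<Longrightarrow>
      \<exists>V. Xmap u d t1 = (\<lambda>x. x - d * V x) \<and> periodic_C2_bounded V E"
    using Xmap_minus_periodic_C2_bounded by blast
  define C where "C = (1 + 14 * E + 2 * E\<^sup>2) * (1 + C1)"
  define \<delta> where "\<delta> = min 1 (1 / (2 * (E + 1)))"
  have "0 < C" "0 < \<delta>"
    unfolding C_def \<delta>_def using E C1 by (simp_all add: add_pos_nonneg)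
  moreover have "H2_per (g \<circ> Xmap u d t1) \<and> H2_hdt_norm h dt (g \<circ> Xmap u d t1) \<le> (1 + C * d) * H2_hdt_norm h dt g"
    if d: "0 < d" "d \<le> \<delta>" and t1: "0 \<le> t1 - d" "t1 \<le> T"
      and mesh: "d \<le> dt" "h ^ 4 \<le> C1 * dt" and g: "H2_per g" for d t1 dt h g
  proof -
    have "d \<le> 1" and d_small: "d \<le> 1 / (2 * (E + 1))"
      using d(2) unfolding \<delta>_def by simp_all
    have "d * E \<le> 1 / (2 * (E + 1)) * E"
      by (rule mult_right_mono[OF d_small E])
    also have "\<dots> \<le> 1 / 2"
      using E by (simp add: field_simps)
    finally have "d * E \<le> 1 / 2" .
    with \<open>d \<le> 1\<close> obtain V X' X'' where X_eq: "Xmap u d t1 = (\<lambda>x. x - d * V x)"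
      and lift: "near_identity_lift (\<lambda>x. x - d * V x) X' X'' (d * E)"
      using foot[OF d(1) _ t1] near_identity_lift_minus[OF _ d(1)] by metis
    interpret X: near_identity_lift "\<lambda>x. x - d * V x" X' X'' "d * E"
      by (fact lift)
    show ?thesis
      unfolding X_eq C_def
      using X.H2_per_compose[OF g] X.H2_hdt_norm_compose_le[OF g refl d(1) \<open>d \<le> 1\<close> E _ mesh(2)] d(1) mesh(1)
      by simp
  qed
  ultimately show ?thesis
    by (rule that)
qed

end

lemma partition_mono:
  assumes "partition K p L" and "i \<le> j" and "j \<le> K"
  shows "p i \<le> p j"
  using assms(2,3)
proof (induction j)
  case (Suc j)
  show ?case
  proof (cases "i = Suc j")
    case False
    then have "p i \<le> p j" "p j < p (Suc j)"
      using Suc assms(1) unfolding partition_def by auto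
    then show ?thesis by simp
  qed simp
qed simp

lemma partition_step_bounds:
  assumes P: "partition K p L" and n: "n < K"
  shows "0 \<le> p n" "p (Suc n) \<le> L" "0 < p (Suc n) - p n" "p (Suc n) - p n \<le> mesh_size K p"
proof -
  show "0 \<le> p n" "p (Suc n) \<le> L"
    using partition_mono[OF P, of 0 n] partition_mono[OF P, of "Suc n" K] P n
    unfolding partition_def by auto
  show "0 < p (Suc n) - p n"
    using P n unfolding partition_def by simp
  show "p (Suc n) - p n \<le> mesh_size K p"
    unfolding mesh_size_def using n by (intro Max_ge) auto
qed

theorem lemma9:
  fixes u ux uxx :: "real \<Rightarrow> real \<Rightarrow> real" and T C1 :: real
  assumes T_pos: "T > 0"
    and C1_pos: "C1 > 0"
    and u_per: "\<And>x t. u (x + 1) t = u x t"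
    and u_dx: "\<And>x t. t \<in> {0..T} \<Longrightarrow> ((\<lambda>y. u y t) has_real_derivative ux x t) (at x)"
    and ux_dx: "\<And>x t. t \<in> {0..T} \<Longrightarrow> ((\<lambda>y. ux y t) has_real_derivative uxx x t) (at x)"
    and u_cont: "continuous_on (UNIV \<times> {0..T}) (\<lambda>(x, t). u x t)"
    and ux_cont: "continuous_on (UNIV \<times> {0..T}) (\<lambda>(x, t). ux x t)"
    and uxx_cont: "continuous_on (UNIV \<times> {0..T}) (\<lambda>(x, t). uxx x t)"
  shows "\<exists>C>0. \<exists>\<delta>>0. \<forall>N tm M xm n g.
           partition N tm T \<longrightarrow> partition M xm 1 \<longrightarrow>
           mesh_size N tm < 1 \<longrightarrow>
           (mesh_size M xm) ^ 4 \<le> C1 * mesh_size N tm \<longrightarrow>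
           n < N \<longrightarrow> tm (Suc n) - tm n \<le> \<delta> \<longrightarrow> H2_per g \<longrightarrow>
           (H2_per (g \<circ> Xmap u (tm (Suc n) - tm n) (tm (Suc n))) \<and>
            H2_hdt_norm (mesh_size M xm) (mesh_size N tm)
                (g \<circ> Xmap u (tm (Suc n) - tm n) (tm (Suc n)))
              \<le> (1 + C * (tm (Suc n) - tm n)) *
                H2_hdt_norm (mesh_size M xm) (mesh_size N tm) g)"
proof -
  interpret velocity u ux uxx T
    using u_per u_dx ux_dx ux_cont uxx_cont by unfold_locales
  obtain C \<delta> where C: "0 < C" and \<delta>: "0 < \<delta>" and step: "\<And>d t1 dt h g. 0 < d \<Longrightarrow> d \<le> \<delta> \<Longrightarrow>
      0 \<le> t1 - d \<Longrightarrow> t1 \<le> T \<Longrightarrow> d \<le> dt \<Longrightarrow> h ^ 4 \<le> C1 * dt \<Longrightarrow> H2_per g \<Longrightarrow>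
      H2_per (g \<circ> Xmap u d t1) \<and> H2_hdt_norm h dt (g \<circ> Xmap u d t1) \<le> (1 + C * d) * H2_hdt_norm h dt g"
    by (rule Xmap_H2_estimate[OF less_imp_le[OF C1_pos]]) blast
  show ?thesis
  proof (rule exI[of _ C], rule conjI[OF C], rule exI[of _ \<delta>], rule conjI[OF \<delta>], intro allI impI)
    fix N tm M xm n g
    assume "partition N tm T" "partition M xm 1" "mesh_size N tm < 1"
      "(mesh_size M xm) ^ 4 \<le> C1 * mesh_size N tm" "n < N" "tm (Suc n) - tm n \<le> \<delta>" "H2_per g"
    with partition_step_bounds[of N tm T n] step
    show "H2_per (g \<circ> Xmap u (tm (Suc n) - tm n) (tm (Suc n))) \<and>
        H2_hdt_norm (mesh_size M xm) (mesh_size N tm) (g \<circ> Xmap u (tm (Suc n) - tm n) (tm (Suc n)))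
          \<le> (1 + C * (tm (Suc n) - tm n)) * H2_hdt_norm (mesh_size M xm) (mesh_size N tm) g"
      by simp
  qed
qed

end
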